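(* Let $m\ge7$ be odd, $h=\frac{m-1}{2}$, $f_5(x)=x^{2^{2h}-2^h+1}\in\mathbb{F}_{2^m}[x]$, and let $s^\infty$ be the sequence $s_t=\operatorname{Tr}(f_5(\alpha^t+1))$, $t\ge0$. Let $L_s=1+m(2^{(m-1)/2}-1)$ if $m\equiv1\pmod4$ and $L_s=1+m(2^{(m-1)/2}-3)$ if $m\equiv3\pmod4$. Then the binary cyclic code $\mathcal{C}_s$ has parameters $[2^m-1,\,2^m-1-L_s,\,d(\mathcal{C}_s)]$ with $2^{(m-3)/2}\le d(\mathcal{C}_s)\le L_s$.
   Context: Let $v=2^m-1$, $\alpha$ a primitive element of $\mathbb{F}_{2^m}$, and $\operatorname{Tr}(x)=\sum_{i=0}^{m-1}x^{2^i}$ the absolute trace from $\mathbb{F}_{2^m}$ to $\mathbb{F}_2$. For a polynomial $F$ over $\mathbb{F}_{2^m}$ the binary sequence $s^\infty=(s_t)_{t\ge0}$ is defined by $s_t=\operatorname{Tr}(F(\alpha^t+1))$; it is periodic with period dividing $v$. Its minimal polynomial $g_s(x)$ is the polynomial $1+c_1x+\dots+c_Lx^L\in\mathbb{F}_2[x]$ of least degree $L$ such that $s_i+c_1s_{i-1}+\dots+c_Ls_{i-L}=0$ for all $i\ge L$; its degree $L_s$ is the linear span of $s^\infty$. $\mathcal{C}_s$ denotes the binary cyclic code of length $v$ with generator polynomial $g_s(x)$. $d(\mathcal{C})$ denotes minimum Hamming distance. *)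

theory Defs
  imports "HOL-Library.Z2" "HOL-Computational_Algebra.Polynomial"
begin

text \<open>Absolute trace from F_{2^m} to F_2 (values 0 or 1 in the big field).\<close>
definition trace2 :: "nat \<Rightarrow> 'a::field \<Rightarrow> 'a" where
  "trace2 m x = (\<Sum>i<m. x ^ (2 ^ i))"

definition primitive_elem :: "'a::{finite,field} \<Rightarrow> bool" where
  "primitive_elem (a::'a) \<longleftrightarrow> a \<noteq> 0 \<and> (\<forall>k. 0 < k \<and> k < card (UNIV::'a set) - 1 \<longrightarrow> a ^ k \<noteq> 1)"

definition trace_seq :: "nat \<Rightarrow> ('a::field \<Rightarrow> 'a) \<Rightarrow> 'a \<Rightarrow> nat \<Rightarrow> bit" where
  "trace_seq m F a t = (if trace2 m (F (a ^ t + 1)) = 0 then 0 else 1)"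

text \<open>g = 1 + c_1 x + ... + c_L x^L gives the recurrence
  s_i + c_1 s_{i-1} + ... + c_L s_{i-L} = 0 for all i >= L, with L = degree g.\<close>
definition lin_rec :: "bit poly \<Rightarrow> (nat \<Rightarrow> bit) \<Rightarrow> bool" where
  "lin_rec g s \<longleftrightarrow> coeff g 0 = 1 \<and>
     (\<forall>i\<ge>degree g. (\<Sum>j\<le>degree g. coeff g j * s (i - j)) = 0)"

definition is_min_poly :: "(nat \<Rightarrow> bit) \<Rightarrow> bit poly \<Rightarrow> bool" where
  "is_min_poly s g \<longleftrightarrow> lin_rec g s \<and> (\<forall>g'. lin_rec g' s \<longrightarrow> degree g \<le> degree g')"

definition cyclic_code :: "nat \<Rightarrow> bit poly \<Rightarrow> bit poly set" where
  "cyclic_code n g = {c. (c = 0 \<or> degree c < n) \<and> g dvd c}"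

definition hweight :: "bit poly \<Rightarrow> nat" where
  "hweight c = card {i. coeff c i \<noteq> 0}"

definition min_dist :: "bit poly set \<Rightarrow> nat" where
  "min_dist C = Min (hweight ` (C - {0}))"

end

theory Submission
  imports Defs "HOL-Library.Nat_Bijection"
begin

text \<open>
  Let \<open>m = 2 h + 1\<close>. The exponent \<open>d = 2 ^ (2 h) - 2 ^ h + 1\<close> has binary digits
  \<open>D = {0} \<union> {h..<2 h}\<close>, so by Lucas' theorem \<open>(y + 1) ^ d\<close> is the sum of the \<open>y ^ e\<close> over the
  digit subsets \<open>e\<close> of \<open>D\<close>. Taking the trace groups these monomials by cyclic shifts of
  the digits: \<open>s t\<close> is the power sum of the \<open>(\<alpha> ^ e) ^ t\<close> over those \<open>E \<subseteq> \<int>/m\<close> that have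
  an odd number of cyclic shifts inside \<open>D\<close>. These \<open>\<alpha> ^ e\<close> are distinct and closed under
  squaring, so the minimal polynomial is \<open>\<Prod>(1 - \<alpha> ^ e x)\<close> and the linear span is the number
  of such \<open>E\<close>; counting the shift classes gives \<open>L\<^sub>s\<close>.

  For the code, \<open>2 ^ (h - 1) - 1\<close> of these sets have consecutive values \<open>e\<close>, which gives the
  lower bound by the BCH bound. The generator has weight at most \<open>L\<^sub>s\<close>: otherwise all its
  \<open>L\<^sub>s + 1\<close> coefficients are \<open>1\<close> and, \<open>L\<^sub>s\<close> being even, it would not vanish at the root \<open>1\<close>
  contributed by \<open>E = {}\<close>.
\<close>
section \<open>Finite fields of characteristic 2\<close>

lemma power_card_minus_one_eq_one:
  fixes x :: "'a::{finite,field}"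
  assumes "x \<noteq> 0"
  shows "x ^ (card (UNIV::'a set) - 1) = 1"
proof -
  let ?N = "UNIV - {0::'a}"
  have bij: "bij_betw (\<lambda>y. x * y) ?N ?N"
  proof -
    have "y \<in> (\<lambda>y. x * y) ` ?N" if "y \<noteq> 0" for y
      by (rule image_eqI[where x="y/x"]) (use assms that in auto)
    then show ?thesis unfolding bij_betw_def inj_on_def using assms by auto
  qed
  have "(\<Prod>y\<in>?N. x * y) = (\<Prod>y\<in>?N. y)"
    using prod.reindex_bij_betw[OF bij, of "\<lambda>y. y"] by simp
  moreover have "(\<Prod>y\<in>?N. x * y) = x ^ card ?N * (\<Prod>y\<in>?N. y)"
    by (simp add: prod.distrib)
  moreover have "card ?N = card (UNIV::'a set) - 1" by (simp add: card_Diff_singleton)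
  moreover have "(\<Prod>y\<in>?N. y) \<noteq> 0" by simp
  ultimately show ?thesis by simp
qed

lemma power_card_eq_self:
  fixes x :: "'a::{finite,field}"
  shows "x ^ card (UNIV::'a set) = x"
proof (cases "x = 0")
  case False
  have "card (UNIV::'a set) = Suc (card (UNIV::'a set) - 1)" using card_gt_0_iff[of "UNIV::'a set"] by auto
  then show ?thesis using power_card_minus_one_eq_one[OF False] by (metis power_Suc mult_1_right)
qed (simp add: card_gt_0_iff)

lemma two_eq_zero_if_card_eq_power_two:
  assumes "card (UNIV::'a::{finite,field} set) = 2 ^ m" "m > 0"
  shows "(2::'a) = 0"
proof -
  have "(-1::'a) ^ (2 ^ m) = -1" using power_card_eq_self[of "-1::'a"] assms by simp
  then have "(1::'a) = -1" using assms by simp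
  then show ?thesis by (metis add_eq_0_iff one_add_one)
qed

lemma power_two_power_mod:
  fixes y :: "'a::{finite,field}"
  assumes "card (UNIV::'a set) = 2 ^ m"
  shows "y ^ (2 ^ (n mod m)) = y ^ (2 ^ n)"
proof -
  have frob_iter: "z ^ (2 ^ (k * m)) = z" for z :: 'a and k
  proof (induction k)
    case (Suc k)
    have "z ^ (2 ^ (Suc k * m)) = (z ^ (2 ^ (k * m))) ^ (2 ^ m)"
      by (simp add: power_add power_mult[symmetric] mult.commute)
    then show ?case using Suc power_card_eq_self[of z] assms by simp
  qed simp
  have "y ^ (2 ^ n) = (y ^ (2 ^ (n mod m))) ^ (2 ^ ((n div m) * m))"
    by (metis div_mult_mod_eq power_add power_mult mult.commute)
  then show ?thesis using frob_iter by simp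
qed

lemma eq_0_or_1_if_square_eq:
  assumes "(c::'a::field) ^ 2 = c"
  shows "c = 0 \<or> c = 1"
proof -
  have "c * (c - 1) = 0" using assms by (simp add: algebra_simps power2_eq_square)
  then show ?thesis by simp
qed

lemma of_bit_eq_iff: "(of_bit a :: 'a::zero_neq_one) = of_bit b \<longleftrightarrow> a = b"
  by (cases a; cases b) simp_all

lemma of_bit_mult: "(of_bit (a * b) :: 'a::semiring_1) = of_bit a * of_bit b"
  by (cases a; cases b) simp_all

lemma degree_map_poly_of_bit [simp]:
  "degree (map_poly (of_bit :: bit \<Rightarrow> 'a::zero_neq_one) g) = degree g"
  by (rule degree_map_poly) (simp split: bit.split)

lemma coeff_map_poly_of_bit:
  "coeff (map_poly (of_bit :: bit \<Rightarrow> 'a::zero_neq_one) g) j = of_bit (coeff g j)"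
  by (rule coeff_map_poly) simp

context
  assumes char2: "(2::'a::field) = 0"
begin

lemma char2_add_self: "(x::'a) + x = 0"
  using char2 by (metis mult_2 mult_zero_left)

lemma char2_minus_eq: "- (x::'a) = x"
  using char2_add_self by (metis add_eq_0_iff)

lemma char2_power_two_power_add: "((a::'a) + b) ^ (2 ^ i) = a ^ (2 ^ i) + b ^ (2 ^ i)"
proof (induction i arbitrary: a b)
  case (Suc i)
  have square_add: "((x::'a) + y) ^ 2 = x ^ 2 + y ^ 2" for x y
    by (simp add: power2_sum char2)
  have "(a + b) ^ (2 ^ Suc i) = ((a + b) ^ 2) ^ (2 ^ i)"
    by (simp add: power_mult[symmetric] mult.commute)
  also have "\<dots> = (a ^ 2) ^ (2 ^ i) + (b ^ 2) ^ (2 ^ i)" by (simp only: square_add Suc.IH)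
  also have "\<dots> = a ^ (2 ^ Suc i) + b ^ (2 ^ Suc i)" by (simp add: power_mult[symmetric] mult.commute)
  finally show ?case .
qed simp

lemma char2_power_two_power_sum:
  "finite A \<Longrightarrow> (\<Sum>x\<in>A. (f x :: 'a)) ^ (2 ^ i) = (\<Sum>x\<in>A. f x ^ (2 ^ i))"
  by (induction A rule: finite_induct) (simp_all add: char2_power_two_power_add)

lemma char2_of_bit_add: "(of_bit (a + b) :: 'a) = of_bit a + of_bit b"
  by (cases a; cases b) (simp_all add: char2_add_self)

lemma char2_of_bit_sum: "(of_bit (\<Sum>x\<in>A. f x) :: 'a) = (\<Sum>x\<in>A. of_bit (f x))"
proof (induction A rule: infinite_finite_induct)
  case (insert x F)
  show ?case by (simp only: sum.insert[OF insert.hyps] char2_of_bit_add insert.IH)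
qed simp_all

lemma char2_of_nat: "(of_nat n :: 'a) = (if odd n then 1 else 0)"
  by (induction n) (auto simp: char2_add_self)

lemma char2_map_poly_of_bit_mult:
  "map_poly (of_bit :: bit \<Rightarrow> 'a) (p * q) = map_poly of_bit p * map_poly of_bit q"
  by (rule poly_eqI)
    (simp only: coeff_map_poly_of_bit coeff_mult char2_of_bit_sum of_bit_mult)

lemma char2_map_poly_square_mult:
  "map_poly (\<lambda>x. x ^ 2) (p * q) = map_poly (\<lambda>x. x ^ 2) p * map_poly (\<lambda>x::'a. x ^ 2) q"
proof (rule poly_eqI)
  fix n
  have "coeff (map_poly (\<lambda>x. x ^ 2) (p * q)) n = (\<Sum>i\<le>n. coeff p i * coeff q (n - i)) ^ 2"
    by (simp add: coeff_map_poly coeff_mult)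
  also have "\<dots> = (\<Sum>i\<le>n. (coeff p i * coeff q (n - i)) ^ 2)"
    using char2_power_two_power_sum[of "{..n}" "\<lambda>i. coeff p i * coeff q (n - i)" 1] by simp
  finally show "coeff (map_poly (\<lambda>x. x ^ 2) (p * q)) n
      = coeff (map_poly (\<lambda>x. x ^ 2) p * map_poly (\<lambda>x. x ^ 2) q) n"
    by (simp add: coeff_map_poly coeff_mult power_mult_distrib)
qed

lemma char2_map_poly_square_prod:
  "map_poly (\<lambda>x. x ^ 2) (\<Prod>i\<in>A. f i) = (\<Prod>i\<in>A. map_poly (\<lambda>x::'a. x ^ 2) (f i))"
  by (induction A rule: infinite_finite_induct)
    (simp_all add: map_poly_pCons one_pCons char2_map_poly_square_mult)

text \<open>Lucas' theorem in characteristic 2, with exponents given by their sets of binary digits.\<close>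
lemma char2_add_one_power_set_encode:
  assumes "finite K"
  shows "((y::'a) + 1) ^ set_encode K = (\<Sum>K'\<in>Pow K. y ^ set_encode K')"
proof -
  have "(y + 1) ^ set_encode K = (\<Prod>i\<in>K. y ^ (2 ^ i) + 1)"
    unfolding set_encode_def by (simp add: power_sum char2_power_two_power_add)
  also have "\<dots> = (\<Sum>X\<in>Pow K. (\<Prod>i\<in>X. y ^ (2 ^ i)) * (\<Prod>i\<in>K - X. 1))"
    by (rule prod_add[OF assms])
  finally show ?thesis unfolding set_encode_def by (simp add: power_sum)
qed

lemma trace2_square:
  assumes "(x::'a) ^ (2 ^ m) = x"
  shows "trace2 m x ^ 2 = trace2 m x"
proof -
  have "trace2 m x ^ 2 = (\<Sum>i<m. (x ^ (2 ^ i)) ^ 2)"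
    unfolding trace2_def using char2_power_two_power_sum[of "{..<m}" "\<lambda>i. x ^ (2 ^ i)" 1] by simp
  also have "\<dots> = (\<Sum>i\<in>Suc ` {..<m}. x ^ (2 ^ i))"
    by (simp add: sum.reindex power_mult[symmetric] power_Suc2 mult.commute)
  also have "Suc ` {..<m} = {1..m}" by (rule image_Suc_lessThan)
  also have "(\<Sum>i\<in>{1..m}. x ^ (2 ^ i)) = trace2 m x"
  proof (cases m)
    case (Suc k)
    have "{1..m} = insert m {1..<m}" "{..<m} = insert 0 {1..<m}" using Suc by auto
    then show ?thesis unfolding trace2_def using assms by simp
  qed (simp add: trace2_def)
  finally show ?thesis .
qed

lemma trace2_eq_0_or_1:
  assumes "(x::'a) ^ (2 ^ m) = x"
  shows "trace2 m x = 0 \<or> trace2 m x = 1"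
  using trace2_square[OF assms] by (rule eq_0_or_1_if_square_eq)

end

section \<open>Power sums and linear recurrences\<close>

lemma vandermonde_coeffs_eq_zero:
  fixes \<beta> a :: "'i \<Rightarrow> 'a::field"
  assumes "finite I" "inj_on \<beta> I" "\<forall>i\<in>I. \<beta> i \<noteq> 0"
    "\<forall>l. L \<le> l \<and> l < L + card I \<longrightarrow> (\<Sum>i\<in>I. a i * \<beta> i ^ l) = 0"
  shows "\<forall>i\<in>I. a i = 0"
  using assms
proof (induction I arbitrary: a L rule: finite_induct)
  case (insert j F)
  let ?u = "\<lambda>l. (\<Sum>i\<in>insert j F. a i * \<beta> i ^ l)"
  define a' where "a' i = a i * (\<beta> i - \<beta> j)" for i
  have u_expand: "?u l = a j * \<beta> j ^ l + (\<Sum>i\<in>F. a i * \<beta> i ^ l)" for l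
    using insert.hyps by simp
  \<comment> \<open>eliminating \<open>\<beta> j\<close>: the coefficients \<open>a'\<close> satisfy the same equations on \<open>F\<close>\<close>
  have "(\<Sum>i\<in>F. a' i * \<beta> i ^ l) = 0" if "L \<le> l" "l < L + card F" for l
  proof -
    have "(\<Sum>i\<in>F. a' i * \<beta> i ^ l) = ?u (Suc l) - \<beta> j * ?u l"
      unfolding a'_def u_expand by (simp add: sum_distrib_left sum_subtractf algebra_simps)
    moreover have "?u (Suc l) = 0" "?u l = 0"
      using insert.prems(3) insert.hyps that by (auto simp del: power_Suc sum.insert)
    ultimately show ?thesis by simp
  qed
  then have "\<forall>i\<in>F. a' i = 0"
    using insert.IH[where a=a' and L=L] insert.prems by (auto simp: inj_on_def)
  then have aF: "\<forall>i\<in>F. a i = 0"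
    unfolding a'_def using insert.prems(1) insert.hyps by (auto simp: inj_on_def)
  have "?u L = 0" using insert.prems(3) insert.hyps by auto
  then have "a j = 0" using aF insert.prems(2) unfolding u_expand by simp
  then show ?case using aF by simp
qed simp

locale binary_power_sum =
  fixes \<beta> :: "'i \<Rightarrow> 'a::field" and S :: "'i set" and s :: "nat \<Rightarrow> bit"
  assumes char2: "(2::'a) = 0" and finite_S: "finite S" and inj_\<beta>: "inj_on \<beta> S"
    and \<beta>_nonzero: "\<forall>E\<in>S. \<beta> E \<noteq> 0"
    and s_eq: "\<forall>t. (of_bit (s t) :: 'a) = (\<Sum>E\<in>S. \<beta> E ^ t)"
begin

lemma of_bit_recurrence_sum:
  assumes i: "i \<ge> degree g"
  shows "(of_bit (\<Sum>j\<le>degree g. coeff g j * s (i - j)) :: 'a)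
    = (\<Sum>E\<in>S. \<beta> E ^ i * poly (map_poly of_bit g) (inverse (\<beta> E)))"
proof -
  have "(of_bit (\<Sum>j\<le>degree g. coeff g j * s (i - j)) :: 'a)
      = (\<Sum>E\<in>S. \<Sum>j\<le>degree g. of_bit (coeff g j) * \<beta> E ^ (i - j))"
    by (simp only: char2_of_bit_sum[OF char2] of_bit_mult s_eq)
      (simp add: sum_distrib_left sum.swap[of _ S])
  also have "\<dots> = (\<Sum>E\<in>S. \<beta> E ^ i * poly (map_poly of_bit g) (inverse (\<beta> E)))"
  proof (rule sum.cong[OF refl])
    fix E assume E: "E \<in> S"
    have "\<beta> E ^ i * poly (map_poly of_bit g) (inverse (\<beta> E))
        = (\<Sum>j\<le>degree g. of_bit (coeff g j) * (\<beta> E ^ i * inverse (\<beta> E) ^ j))"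
      unfolding poly_altdef degree_map_poly_of_bit coeff_map_poly_of_bit
      by (simp only: sum_distrib_left mult.assoc mult.commute mult.left_commute)
    also have "\<dots> = (\<Sum>j\<le>degree g. of_bit (coeff g j) * \<beta> E ^ (i - j))"
      using i \<beta>_nonzero E by (intro sum.cong) (simp_all add: power_diff divide_inverse power_inverse)
    finally show "(\<Sum>j\<le>degree g. of_bit (coeff g j) * \<beta> E ^ (i - j))
        = \<beta> E ^ i * poly (map_poly of_bit g) (inverse (\<beta> E))" by simp
  qed
  finally show ?thesis .
qed

lemma lin_rec_roots:
  assumes "lin_rec g s" "E \<in> S"
  shows "poly (map_poly (of_bit :: bit \<Rightarrow> 'a) g) (inverse (\<beta> E)) = 0"
proof -
  let ?G = "map_poly (of_bit :: bit \<Rightarrow> 'a) g"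
  have "\<forall>l. degree g \<le> l \<and> l < degree g + card S
      \<longrightarrow> (\<Sum>E\<in>S. poly ?G (inverse (\<beta> E)) * \<beta> E ^ l) = 0"
  proof (intro allI impI)
    fix l assume l: "degree g \<le> l \<and> l < degree g + card S"
    then have "(of_bit (\<Sum>j\<le>degree g. coeff g j * s (l - j)) :: 'a) = 0"
      using assms(1) unfolding lin_rec_def by simp
    then show "(\<Sum>E\<in>S. poly ?G (inverse (\<beta> E)) * \<beta> E ^ l) = 0"
      using of_bit_recurrence_sum[of g l] l by (simp add: mult.commute)
  qed
  then show ?thesis
    using vandermonde_coeffs_eq_zero[OF finite_S inj_\<beta> \<beta>_nonzero,
        where a="\<lambda>E. poly ?G (inverse (\<beta> E))"] assms(2) by blast
qed

lemma card_le_degree_if_lin_rec: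
  assumes "lin_rec g s"
  shows "card S \<le> degree g"
proof -
  let ?G = "map_poly (of_bit :: bit \<Rightarrow> 'a) g"
  have "coeff ?G 0 = 1"
    using assms unfolding lin_rec_def coeff_map_poly_of_bit by simp
  then have G: "?G \<noteq> 0" by auto
  have "inj_on (\<lambda>E. inverse (\<beta> E)) S" using inj_\<beta> by (auto simp: inj_on_def)
  then have "card S = card ((\<lambda>E. inverse (\<beta> E)) ` S)" by (simp add: card_image)
  also have "\<dots> \<le> card {x. poly ?G x = 0}"
    by (rule card_mono[OF poly_roots_finite[OF G]]) (use lin_rec_roots[OF assms] in auto)
  also have "\<dots> \<le> degree ?G" by (rule card_poly_roots_bound[OF G])
  finally show ?thesis by (simp only: degree_map_poly_of_bit)
qed

lemma lin_rec_if_binary_product: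
  assumes binary: "\<forall>k. coeff (\<Prod>E\<in>S. [:1, - \<beta> E:]) k = 0 \<or> coeff (\<Prod>E\<in>S. [:1, - \<beta> E:]) k = 1"
  shows "\<exists>g. lin_rec g s \<and> degree g = card S"
proof -
  define P where "P = (\<Prod>E\<in>S. [:1, - \<beta> E:])"
  define g where "g = map_poly (\<lambda>c::'a. if c = 0 then 0 else (1::bit)) P"
  have g_P: "map_poly (of_bit :: bit \<Rightarrow> 'a) g = P"
  proof (rule poly_eqI)
    fix k
    have "coeff g k = (if coeff P k = 0 then 0 else 1)"
      unfolding g_def by (subst coeff_map_poly) simp_all
    then show "coeff (map_poly of_bit g) k = coeff P k"
      using binary unfolding coeff_map_poly_of_bit P_def by auto
  qed
  have "degree P = card S"
    unfolding P_def using \<beta>_nonzero by (subst degree_prod_eq_sum_degree) auto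
  then have degree_g: "degree g = card S" by (metis g_P degree_map_poly_of_bit)
  have "coeff P 0 = 1"
    unfolding P_def poly_0_coeff_0[symmetric] poly_prod by simp
  then have "(of_bit (coeff g 0) :: 'a) = 1" using g_P by (metis coeff_map_poly_of_bit)
  then have "coeff g 0 = 1" by (cases "coeff g 0") simp_all
  moreover have "(\<Sum>j\<le>degree g. coeff g j * s (i - j)) = 0" if "i \<ge> degree g" for i
  proof -
    have "poly P (inverse (\<beta> E)) = 0" if "E \<in> S" for E
      unfolding P_def poly_prod using that finite_S \<beta>_nonzero by (auto intro!: prod_zero bexI[OF _ that])
    then have "(of_bit (\<Sum>j\<le>degree g. coeff g j * s (i - j)) :: 'a) = 0"
      using of_bit_recurrence_sum[OF that] g_P by simp
    then show ?thesis using of_bit_eq_iff[of _ 0] by simp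
  qed
  ultimately show ?thesis unfolding lin_rec_def using degree_g by blast
qed

lemma degree_min_poly:
  assumes "is_min_poly s g"
    and "\<forall>k. coeff (\<Prod>E\<in>S. [:1, - \<beta> E:]) k = 0 \<or> coeff (\<Prod>E\<in>S. [:1, - \<beta> E:]) k = 1"
  shows "degree g = card S"
proof -
  obtain g' where "lin_rec g' s" "degree g' = card S"
    using lin_rec_if_binary_product[OF assms(2)] by blast
  then show ?thesis
    using assms(1) card_le_degree_if_lin_rec unfolding is_min_poly_def by (metis le_antisym)
qed

end

section \<open>Binary cyclic codes\<close>

lemma UNIV_bit: "(UNIV::bit set) = {0, 1}"
  by (auto intro: bit.exhaust)

lemma card_bit_polys_degree_less: "card {q::bit poly. q = 0 \<or> degree q < k} = 2 ^ k"
proof -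
  let ?B = "{q::bit poly. q = 0 \<or> degree q < k}"
  let ?L = "{xs::bit list. set xs \<subseteq> UNIV \<and> length xs = k}"
  have "bij_betw (\<lambda>q. map (coeff q) [0..<k]) ?B ?L"
  proof (rule bij_betw_byWitness[where f'=Poly])
    show "\<forall>q\<in>?B. Poly (map (coeff q) [0..<k]) = q"
      by (auto intro!: poly_eqI simp: nth_default_def coeff_eq_0)
    show "\<forall>xs\<in>?L. map (coeff (Poly xs)) [0..<k] = xs"
      by (auto intro!: nth_equalityI simp: nth_default_def)
    show "Poly ` ?L \<subseteq> ?B"
      by (auto simp: nth_default_def intro!: degree_lessI)
  qed auto
  then have "card ?B = card ?L" by (rule bij_betw_same_card)
  also have "\<dots> = card (UNIV::bit set) ^ k" by (rule card_lists_length_eq) (simp add: UNIV_bit)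
  also have "card (UNIV::bit set) = 2" by (simp add: UNIV_bit)
  finally show ?thesis .
qed

lemma cyclic_code_eq_image:
  assumes g: "g \<noteq> 0" "degree g \<le> n"
  shows "cyclic_code n g = (\<lambda>q. g * q) ` {q. q = 0 \<or> degree q < n - degree g}"
proof -
  have degree_iff: "degree (g * q) < n \<longleftrightarrow> degree q < n - degree g" if "q \<noteq> 0" for q
    using that g by (simp add: degree_mult_eq less_diff_conv add.commute)
  show ?thesis
  proof (intro equalityI subsetI)
    fix c assume "c \<in> cyclic_code n g"
    then have "g dvd c" "c = 0 \<or> degree c < n" unfolding cyclic_code_def by auto
    then obtain q where "c = g * q" "c = 0 \<or> degree c < n" by (blast elim: dvdE)
    then show "c \<in> (\<lambda>q. g * q) ` {q. q = 0 \<or> degree q < n - degree g}"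
      using degree_iff g by (cases "q = 0") auto
  next
    fix c assume "c \<in> (\<lambda>q. g * q) ` {q. q = 0 \<or> degree q < n - degree g}"
    then obtain q where "c = g * q" "q = 0 \<or> degree q < n - degree g" by auto
    then show "c \<in> cyclic_code n g"
      unfolding cyclic_code_def using degree_iff by (cases "q = 0") auto
  qed
qed

lemma card_cyclic_code:
  assumes "g \<noteq> 0" "degree g \<le> n"
  shows "card (cyclic_code n g) = 2 ^ (n - degree g)"
proof -
  have "inj_on (\<lambda>q. g * q) {q. q = 0 \<or> degree q < n - degree g}"
    using assms by (auto simp: inj_on_def)
  then show ?thesis
    unfolding cyclic_code_eq_image[OF assms] by (simp add: card_image card_bit_polys_degree_less)
qed

lemma poly_map_poly_of_bit:
  fixes x :: "'a::field"
  shows "poly (map_poly of_bit c) x = (\<Sum>i\<in>{i. coeff c i \<noteq> 0}. x ^ i)"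
proof -
  have "poly (map_poly of_bit c) x = (\<Sum>i\<in>{..degree c}. if coeff c i \<noteq> 0 then x ^ i else 0)"
    unfolding poly_altdef degree_map_poly_of_bit coeff_map_poly_of_bit
    by (rule sum.cong) auto
  also have "\<dots> = (\<Sum>i\<in>{i\<in>{..degree c}. coeff c i \<noteq> 0}. x ^ i)"
    by (rule sum.inter_filter[symmetric]) simp
  also have "{i\<in>{..degree c}. coeff c i \<noteq> 0} = {i. coeff c i \<noteq> 0}"
    by (auto intro: le_degree)
  finally show ?thesis .
qed

lemma bch_bound:
  fixes c :: "bit poly" and \<beta> :: "'a::field"
  assumes "\<beta> \<noteq> 0" and inj: "inj_on (\<lambda>j. \<beta> ^ j) {..<n}"
    and c: "c \<noteq> 0" "degree c < n"
    and roots: "\<forall>l<\<delta>. poly (map_poly of_bit c) (\<beta> ^ (b + l)) = 0"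
  shows "hweight c > \<delta>"
proof (rule ccontr)
  let ?J = "{i. coeff c i \<noteq> 0}"
  assume "\<not> hweight c > \<delta>"
  then have J_le: "card ?J \<le> \<delta>" unfolding hweight_def by simp
  have J_sub: "?J \<subseteq> {..<n}" using c(2) le_degree by fastforce
  have "\<forall>l. 0 \<le> l \<and> l < 0 + card ?J \<longrightarrow> (\<Sum>i\<in>?J. \<beta> ^ (b * i) * (\<beta> ^ i) ^ l) = 0"
  proof (intro allI impI)
    fix l assume "0 \<le> l \<and> l < 0 + card ?J"
    then have "l < \<delta>" using J_le by simp
    then have "(\<Sum>i\<in>?J. (\<beta> ^ (b + l)) ^ i) = 0"
      using roots unfolding poly_map_poly_of_bit by blast
    then show "(\<Sum>i\<in>?J. \<beta> ^ (b * i) * (\<beta> ^ i) ^ l) = 0"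
      by (simp add: power_add power_mult_distrib power_mult[symmetric] ac_simps)
  qed
  then have "\<forall>i\<in>?J. \<beta> ^ (b * i) = 0"
    using vandermonde_coeffs_eq_zero[OF finite_subset[OF J_sub] inj_on_subset[OF inj J_sub],
        where L=0 and a="\<lambda>i. \<beta> ^ (b * i)"] assms(1) by auto
  moreover have "degree c \<in> ?J" using c(1) by (simp del: bit_not_zero_iff)
  ultimately show False using assms(1) by auto
qed

section \<open>Cyclic shifts of digit sets\<close>

text \<open>A set \<open>E \<subseteq> {..<m}\<close> stands for the exponent \<open>set_encode E\<close>; a cyclic shift by \<open>t\<close>
  multiplies the exponent by \<open>2 ^ t\<close> modulo \<open>2 ^ m - 1\<close> (\<open>power_set_encode_cyclic_shift\<close>).\<close>
definition cyclic_shift :: "nat \<Rightarrow> nat \<Rightarrow> nat set \<Rightarrow> nat set" where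
  "cyclic_shift m t E = (\<lambda>x. (x + t) mod m) ` E"

definition shifts_into :: "nat \<Rightarrow> nat set \<Rightarrow> nat set \<Rightarrow> nat set" where
  "shifts_into m D E = {t. t < m \<and> cyclic_shift m t E \<subseteq> D}"

definition shift_count :: "nat \<Rightarrow> nat set \<Rightarrow> nat set \<Rightarrow> nat" where
  "shift_count m D E = card (shifts_into m D E)"

lemma cyclic_shift_cyclic_shift [simp]:
  "cyclic_shift m a (cyclic_shift m b E) = cyclic_shift m (a + b) E"
  unfolding cyclic_shift_def image_comp o_def
  by (auto simp: mod_add_left_eq add.assoc add.commute[of a b])

lemma cyclic_shift_mod: "cyclic_shift m (t mod m) E = cyclic_shift m t E"
  unfolding cyclic_shift_def by (simp add: mod_add_right_eq)

lemma cyclic_shift_cong: "t mod m = t' mod m \<Longrightarrow> cyclic_shift m t E = cyclic_shift m t' E"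
  by (metis cyclic_shift_mod)

lemma cyclic_shift_subset_lessThan: "m > 0 \<Longrightarrow> cyclic_shift m t E \<subseteq> {..<m}"
  unfolding cyclic_shift_def by auto

lemma cyclic_shift_empty_iff: "cyclic_shift m t E = {} \<longleftrightarrow> E = {}"
  unfolding cyclic_shift_def by auto

lemma cyclic_shift_subset_iff: "cyclic_shift m t E \<subseteq> D \<longleftrightarrow> (\<forall>x\<in>E. (x + t) mod m \<in> D)"
  unfolding cyclic_shift_def by auto

lemma cyclic_shift_mono: "A \<subseteq> B \<Longrightarrow> cyclic_shift m t A \<subseteq> cyclic_shift m t B"
  unfolding cyclic_shift_def by auto

lemma cyclic_shift_eq_self:
  assumes "E \<subseteq> {..<m}" "t mod m = 0"
  shows "cyclic_shift m t E = E"
proof -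
  have "cyclic_shift m t E = cyclic_shift m 0 E" using assms(2) by (intro cyclic_shift_cong) simp
  also have "\<dots> = E" unfolding cyclic_shift_def using assms(1) by (force simp: image_iff)
  finally show ?thesis .
qed

lemma cyclic_shift_0: "E \<subseteq> {..<m} \<Longrightarrow> cyclic_shift m 0 E = E"
  by (simp add: cyclic_shift_eq_self)

lemma cyclic_shift_memI: "x \<in> E \<Longrightarrow> (x + t) mod m \<in> cyclic_shift m t E"
  unfolding cyclic_shift_def by auto

lemma cyclic_shift_memE: "y \<in> cyclic_shift m t E \<Longrightarrow> \<exists>x\<in>E. y = (x + t) mod m"
  unfolding cyclic_shift_def by auto

lemma cyclic_shift_inverse:
  "E \<subseteq> {..<m} \<Longrightarrow> t \<le> m \<Longrightarrow> cyclic_shift m (m - t) (cyclic_shift m t E) = E"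
  by (simp add: cyclic_shift_eq_self)

lemma cyclic_shift_subset_cyclic_shift_iff:
  assumes "A \<subseteq> {..<m}" "B \<subseteq> {..<m}" "t \<le> m"
  shows "cyclic_shift m t A \<subseteq> cyclic_shift m t B \<longleftrightarrow> A \<subseteq> B"
  by (metis assms cyclic_shift_inverse cyclic_shift_mono)

lemma cyclic_shift_undo:
  assumes "E \<subseteq> {..<m}" "t < m"
  shows "cyclic_shift m ((m - t) mod m) (cyclic_shift m t E) = E"
proof -
  have "((m - t) mod m + t) mod m = 0" using assms(2) by (simp add: mod_add_left_eq)
  then show ?thesis using assms(1) by (simp add: cyclic_shift_eq_self)
qed

lemma exists_cyclic_shift_inverse:
  assumes "m > 0" "E \<subseteq> {..<m}"
  shows "\<exists>c<m. cyclic_shift m c (cyclic_shift m s E) = E"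
  using cyclic_shift_undo[OF assms(2), of "s mod m"] assms(1)
  by (intro exI[of _ "(m - s mod m) mod m"]) (simp add: cyclic_shift_mod)

lemma cyclic_shift_diff:
  assumes "E \<subseteq> {..<m}" "\<And>k. k \<in> E \<Longrightarrow> a \<le> k"
  shows "cyclic_shift m (m - a) E = (\<lambda>k. k - a) ` E"
  unfolding cyclic_shift_def
proof (rule image_cong[OF refl])
  fix k assume k: "k \<in> E"
  then have "k < m" "a \<le> k" using assms by auto
  then have "(k + (m - a)) mod m = ((k - a) + m) mod m" by (simp add: add.commute)
  also have "\<dots> = k - a" using \<open>k < m\<close> by simp
  finally show "(k + (m - a)) mod m = k - a" .
qed

lemma inj_on_cyclic_shift:
  assumes "t \<le> m"
  shows "inj_on (cyclic_shift m t) (Pow {..<m})"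
  by (rule inj_on_inverseI[where g="cyclic_shift m (m - t)"]) (use assms cyclic_shift_inverse in auto)

lemma inj_on_add_mod:
  assumes "E \<subseteq> {..<m::nat}"
  shows "inj_on (\<lambda>x. (x + t) mod m) E"
proof (rule inj_onI)
  fix x y assume xy: "x \<in> E" "y \<in> E" "(x + t) mod m = (y + t) mod m"
  have unshift: "cyclic_shift m (m - t mod m) (cyclic_shift m (t mod m) {z}) = {z}"
    if "z < m" for z using cyclic_shift_inverse[of "{z}" m "t mod m"] that by simp
  have "cyclic_shift m (t mod m) {x} = cyclic_shift m (t mod m) {y}"
    using xy(3) unfolding cyclic_shift_def by (simp add: mod_add_right_eq)
  then have "{x} = {y}" using unshift[of x] unshift[of y] xy(1,2) assms by (metis lessThan_iff subsetD)
  then show "x = y" by simp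
qed

lemma cyclic_shift_lessThan: "cyclic_shift m t {..<m} = {..<m}"
proof (cases "m = 0")
  case False
  have "card (cyclic_shift m t {..<m}) = card {..<m}"
    unfolding cyclic_shift_def by (rule card_image) (rule inj_on_add_mod, simp)
  then show ?thesis
    using cyclic_shift_subset_lessThan[of m t] False by (intro card_subset_eq) simp_all
qed (simp add: cyclic_shift_def)

lemma set_encode_lessThan: "set_encode {..<n} = 2 ^ n - 1"
  by (induction n) (simp_all add: lessThan_Suc)

lemma set_encode_less_if_proper_subset:
  assumes "E \<subseteq> {..<n}" "E \<noteq> {..<n}"
  shows "set_encode E < 2 ^ n - 1"
proof -
  obtain x where x: "x \<in> {..<n} - E" using assms by blast
  have "set_encode {..<n} = set_encode E + set_encode ({..<n} - E)"
    unfolding set_encode_def using sum.subset_diff[OF assms(1), of "(^) 2"] by (simp add: add.commute)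
  moreover have "set_encode ({..<n} - E) \<ge> 2 ^ x"
    unfolding set_encode_def using x by (intro member_le_sum) auto
  moreover have "(2::nat) ^ x > 0" by simp
  ultimately show ?thesis using set_encode_lessThan[of n] by linarith
qed

lemma set_decode_subset_lessThan:
  assumes "x < 2 ^ k"
  shows "set_decode x \<subseteq> {..<k}"
proof
  fix n assume "n \<in> set_decode x"
  then have "2 ^ n \<le> set_encode (set_decode x)"
    unfolding set_encode_def by (intro member_le_sum) simp_all
  then have "2 ^ n \<le> x" by simp
  then have "(2::nat) ^ n < 2 ^ k" using assms by linarith
  then show "n \<in> {..<k}" by simp
qed

lemma mod_if_less_double: "(a::nat) < 2 * (m::nat) \<Longrightarrow> a mod m = (if a < m then a else a - m)"
  by (simp add: le_mod_geq)

lemma card_add_mod_preimage: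
  assumes "m > (0::nat)" "T \<subseteq> {..<m}"
  shows "card {t. t < m \<and> (t + a) mod m \<in> T} = card T"
proof -
  let ?f = "\<lambda>t. (t + a) mod m"
  let ?P = "{t. t < m \<and> ?f t \<in> T}"
  have "?f ` {..<m} = {..<m}"
    using cyclic_shift_lessThan[of m a] unfolding cyclic_shift_def .
  then have "?f ` ?P = T" using assms(2) by (auto simp: image_iff)
  moreover have "inj_on ?f ?P" by (rule inj_on_add_mod) auto
  ultimately show ?thesis by (metis card_image)
qed

lemma shift_count_cyclic_shift:
  assumes "m > 0"
  shows "shift_count m D (cyclic_shift m a E) = shift_count m D E"
proof -
  have eq: "shifts_into m D (cyclic_shift m a E)
      = {t. t < m \<and> (t + a) mod m \<in> shifts_into m D E}"
    unfolding shifts_into_def using assms by (auto simp: cyclic_shift_mod)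
  have "shifts_into m D E \<subseteq> {..<m}" unfolding shifts_into_def by auto
  then show ?thesis unfolding shift_count_def eq by (rule card_add_mod_preimage[OF assms])
qed

lemma shift_count_cyclic_shift_right:
  assumes "m > 0" "D \<subseteq> {..<m}" "E \<subseteq> {..<m}"
  shows "shift_count m (cyclic_shift m a D) E = shift_count m D E"
proof -
  let ?c = "m - a mod m"
  have "(?c + a) mod m = (?c + a mod m) mod m" by (rule mod_add_right_eq[symmetric])
  also have "?c + a mod m = m" using assms(1) by (simp add: le_less)
  finally have "cyclic_shift m ?c (cyclic_shift m a D) = D"
    using assms(2) by (simp add: cyclic_shift_eq_self)
  then have "cyclic_shift m t E \<subseteq> cyclic_shift m a D
      \<longleftrightarrow> cyclic_shift m (t + ?c) E \<subseteq> D" for t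
    using cyclic_shift_subset_cyclic_shift_iff[of "cyclic_shift m t E" m "cyclic_shift m a D" ?c]
      cyclic_shift_subset_lessThan[OF assms(1)] by (simp add: add.commute)
  then have eq: "shifts_into m (cyclic_shift m a D) E
      = {t. t < m \<and> (t + ?c) mod m \<in> shifts_into m D E}"
    unfolding shifts_into_def using assms(1) by (auto simp: cyclic_shift_mod)
  have "shifts_into m D E \<subseteq> {..<m}" unfolding shifts_into_def by auto
  then show ?thesis unfolding shift_count_def eq by (rule card_add_mod_preimage[OF assms(1)])
qed

lemma card_cyclic_shift_fiber:
  assumes "D \<subseteq> {..<m}" "E \<subseteq> {..<m}"
  shows "card {p \<in> {..<m} \<times> Pow D. cyclic_shift m (fst p) (snd p) = E} = shift_count m D E"
proof -
  let ?F = "{p \<in> {..<m} \<times> Pow D. cyclic_shift m (fst p) (snd p) = E}"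
  have inverse_mod: "(m - (m - t) mod m) mod m = t" if "t < m" for t
    using that by (cases "t = 0") (auto simp: mod_if_less_double)
  have "bij_betw (\<lambda>t. ((m - t) mod m, cyclic_shift m t E)) (shifts_into m D E) ?F"
  proof (rule bij_betw_byWitness[where f'="\<lambda>p. (m - fst p) mod m"])
    show "\<forall>t\<in>shifts_into m D E. (m - fst ((m - t) mod m, cyclic_shift m t E)) mod m = t"
      using inverse_mod unfolding shifts_into_def by auto
    show "\<forall>p\<in>?F. ((m - (m - fst p) mod m) mod m, cyclic_shift m ((m - fst p) mod m) E) = p"
      using inverse_mod cyclic_shift_undo assms(1) by (auto dest: subset_trans)
    show "(\<lambda>t. ((m - t) mod m, cyclic_shift m t E)) ` shifts_into m D E \<subseteq> ?F"
      using cyclic_shift_undo assms(2) unfolding shifts_into_def by auto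
    show "(\<lambda>p. (m - fst p) mod m) ` ?F \<subseteq> shifts_into m D E"
      using cyclic_shift_undo assms(1) unfolding shifts_into_def by (auto dest: subset_trans)
  qed
  then show ?thesis unfolding shift_count_def by (simp add: bij_betw_same_card)
qed

lemma power_set_encode_cyclic_shift:
  fixes y :: "'a::{finite,field}"
  assumes "card (UNIV::'a set) = 2 ^ m" "E \<subseteq> {..<m}"
  shows "y ^ set_encode (cyclic_shift m t E) = (y ^ set_encode E) ^ (2 ^ t)"
proof -
  have "set_encode (cyclic_shift m t E) = (\<Sum>i\<in>E. 2 ^ ((i + t) mod m))"
    unfolding set_encode_def cyclic_shift_def by (simp add: sum.reindex[OF inj_on_add_mod[OF assms(2)]])
  then have "y ^ set_encode (cyclic_shift m t E) = (\<Prod>i\<in>E. y ^ (2 ^ ((i + t) mod m)))"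
    by (simp add: power_sum)
  also have "\<dots> = (\<Prod>i\<in>E. (y ^ (2 ^ i)) ^ (2 ^ t))"
    by (rule prod.cong[OF refl])
      (simp add: power_two_power_mod[OF assms(1)] power_add power_mult[symmetric])
  also have "\<dots> = (y ^ set_encode E) ^ (2 ^ t)"
    unfolding set_encode_def by (simp add: prod_power_distrib power_sum)
  finally show ?thesis .
qed

section \<open>Trace sequences of power functions\<close>

text \<open>Collecting the Frobenius conjugates of all digit subsets by their shift class.\<close>
lemma trace2_sum_power_set_encode:
  fixes y :: "'a::{finite,field}"
  assumes card: "card (UNIV::'a set) = 2 ^ m" and "m > 0" and D: "D \<subseteq> {..<m}"
  shows "trace2 m (\<Sum>K\<in>Pow D. y ^ set_encode K)
    = (\<Sum>E\<in>Pow {..<m}. of_nat (shift_count m D E) * y ^ set_encode E)"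
proof -
  have char2: "(2::'a) = 0" using two_eq_zero_if_card_eq_power_two[OF card \<open>m > 0\<close>] .
  have fin: "finite D" using D finite_subset by blast
  have "trace2 m (\<Sum>K\<in>Pow D. y ^ set_encode K)
      = (\<Sum>i<m. \<Sum>K\<in>Pow D. y ^ set_encode (cyclic_shift m i K))"
    unfolding trace2_def char2_power_two_power_sum[OF char2 finite_Pow_iff[THEN iffD2, OF fin]]
    using D by (intro sum.cong refl) (auto simp: power_set_encode_cyclic_shift[OF card])
  also have "\<dots> = (\<Sum>p\<in>{..<m} \<times> Pow D. y ^ set_encode (cyclic_shift m (fst p) (snd p)))"
    by (simp add: sum.cartesian_product case_prod_beta)
  also have "\<dots> = (\<Sum>E\<in>Pow {..<m}. \<Sum>p\<in>{p \<in> {..<m} \<times> Pow D. cyclic_shift m (fst p) (snd p) = E}.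
      y ^ set_encode (cyclic_shift m (fst p) (snd p)))"
    by (rule sum.group[symmetric]) (use fin cyclic_shift_subset_lessThan \<open>m > 0\<close> in auto)
  also have "\<dots> = (\<Sum>E\<in>Pow {..<m}. of_nat (shift_count m D E) * y ^ set_encode E)"
    using card_cyclic_shift_fiber[OF D] by (intro sum.cong refl) simp
  finally show ?thesis .
qed

lemma trace2_add_one_power_set_encode:
  fixes y :: "'a::{finite,field}"
  assumes card: "card (UNIV::'a set) = 2 ^ m" and "m > 0" and D: "D \<subseteq> {..<m}"
  shows "trace2 m ((y + 1) ^ set_encode D)
    = (\<Sum>E\<in>{E. E \<subseteq> {..<m} \<and> odd (shift_count m D E)}. y ^ set_encode E)"
proof -
  have char2: "(2::'a) = 0" using two_eq_zero_if_card_eq_power_two[OF card \<open>m > 0\<close>] .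
  have "trace2 m ((y + 1) ^ set_encode D)
      = (\<Sum>E\<in>Pow {..<m}. of_nat (shift_count m D E) * y ^ set_encode E)"
    using D finite_subset[OF D]
    by (simp add: char2_add_one_power_set_encode[OF char2] trace2_sum_power_set_encode[OF assms])
  also have "\<dots> = (\<Sum>E\<in>Pow {..<m}. if odd (shift_count m D E) then y ^ set_encode E else 0)"
    by (intro sum.cong) (simp_all add: char2_of_nat[OF char2])
  also have "\<dots> = (\<Sum>E\<in>{E. E \<subseteq> {..<m} \<and> odd (shift_count m D E)}. y ^ set_encode E)"
    by (simp add: sum.inter_filter[symmetric] Pow_def)
  finally show ?thesis .
qed

locale trace_power_sequence =
  fixes m :: nat and \<alpha> :: "'a::{finite,field}" and D :: "nat set"
  assumes card_UNIV: "card (UNIV::'a set) = 2 ^ m" and m_pos: "m > 0"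
    and primitive: "primitive_elem \<alpha>"
    and D_subset: "D \<subseteq> {..<m}" and D_proper: "D \<noteq> {..<m}"
begin

definition odd_shift_sets :: "nat set set" where
  "odd_shift_sets = {E. E \<subseteq> {..<m} \<and> odd (shift_count m D E)}"

lemma char2: "(2::'a) = 0"
  using two_eq_zero_if_card_eq_power_two[OF card_UNIV m_pos] .

lemma alpha_nonzero: "\<alpha> \<noteq> 0"
  using primitive unfolding primitive_elem_def by simp

lemma power_alpha_inj:
  assumes "a < 2 ^ m - 1" "b < 2 ^ m - 1" "\<alpha> ^ a = \<alpha> ^ b"
  shows "a = b"
proof (rule ccontr)
  have one: "\<alpha> ^ (y - x) = 1" if "x < y" "\<alpha> ^ x = \<alpha> ^ y" for x y
  proof -
    have "x + (y - x) = y" using that by simp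
    then have "\<alpha> ^ x * \<alpha> ^ (y - x) = \<alpha> ^ x * 1"
      using that by (metis power_add mult_1_right)
    then show ?thesis using alpha_nonzero by simp
  qed
  assume "a \<noteq> b"
  then have "\<exists>k. 0 < k \<and> k < 2 ^ m - 1 \<and> \<alpha> ^ k = 1"
  proof (cases "a < b")
    case True
    then show ?thesis using one[of a b] assms by (intro exI[of _ "b - a"]) auto
  next
    case False
    then have "b < a" using \<open>a \<noteq> b\<close> by simp
    then show ?thesis using one[of b a] assms by (intro exI[of _ "a - b"]) auto
  qed
  then show False using primitive card_UNIV unfolding primitive_elem_def by auto
qed

lemma finite_odd_shift_sets: "finite odd_shift_sets"
  unfolding odd_shift_sets_def by (rule finite_subset[of _ "Pow {..<m}"]) auto

lemma odd_shift_sets_subset: "E \<in> odd_shift_sets \<Longrightarrow> E \<subseteq> {..<m}"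
  unfolding odd_shift_sets_def by simp

lemma lessThan_notin_odd_shift_sets: "{..<m} \<notin> odd_shift_sets"
proof -
  have "\<not> {..<m} \<subseteq> D" using D_subset D_proper by blast
  then have "shift_count m D {..<m} = 0"
    unfolding shift_count_def shifts_into_def by (simp add: cyclic_shift_lessThan)
  then show ?thesis unfolding odd_shift_sets_def by simp
qed

lemma inj_on_power_set_encode: "inj_on (\<lambda>E. \<alpha> ^ set_encode E) odd_shift_sets"
proof (rule inj_onI)
  fix E E' assume E: "E \<in> odd_shift_sets" "E' \<in> odd_shift_sets"
    and eq: "\<alpha> ^ set_encode E = \<alpha> ^ set_encode E'"
  have "set_encode A < 2 ^ m - 1" if "A \<in> odd_shift_sets" for A
    using that odd_shift_sets_subset lessThan_notin_odd_shift_sets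
    by (intro set_encode_less_if_proper_subset) auto
  then have "set_encode E = set_encode E'" using power_alpha_inj E eq by blast
  moreover have "finite E" "finite E'"
    using E odd_shift_sets_subset finite_subset by blast+
  ultimately show "E = E'" using set_encode_eq by blast
qed

lemma of_bit_trace_seq:
  "(of_bit (trace_seq m (\<lambda>x. x ^ set_encode D) \<alpha> t) :: 'a)
    = (\<Sum>E\<in>odd_shift_sets. (\<alpha> ^ set_encode E) ^ t)"
proof -
  let ?z = "(\<alpha> ^ t + 1) ^ set_encode D"
  have "trace2 m ?z = (\<Sum>E\<in>odd_shift_sets. (\<alpha> ^ set_encode E) ^ t)"
    unfolding trace2_add_one_power_set_encode[OF card_UNIV m_pos D_subset] odd_shift_sets_def
    by (simp add: power_mult[symmetric] mult.commute)
  moreover have "?z ^ (2 ^ m) = ?z" using power_card_eq_self[of ?z] card_UNIV by simp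
  then have "trace2 m ?z = 0 \<or> trace2 m ?z = 1" by (rule trace2_eq_0_or_1[OF char2])
  ultimately show ?thesis unfolding trace_seq_def by auto
qed

sublocale binary_power_sum "\<lambda>E. \<alpha> ^ set_encode E" odd_shift_sets
  "trace_seq m (\<lambda>x. x ^ set_encode D) \<alpha>"
  using char2 finite_odd_shift_sets inj_on_power_set_encode alpha_nonzero of_bit_trace_seq
  by unfold_locales simp_all

lemma cyclic_shift_odd_shift_sets: "cyclic_shift m 1 ` odd_shift_sets = odd_shift_sets"
proof -
  have shift: "cyclic_shift m t E \<in> odd_shift_sets" if "E \<in> odd_shift_sets" for t E
    using that shift_count_cyclic_shift[OF m_pos] cyclic_shift_subset_lessThan[OF m_pos]
    unfolding odd_shift_sets_def by auto
  have "E \<in> cyclic_shift m 1 ` odd_shift_sets" if "E \<in> odd_shift_sets" for E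
  proof -
    have "cyclic_shift m 1 (cyclic_shift m (m - 1) E) = E"
      using odd_shift_sets_subset[OF that] m_pos by (simp add: cyclic_shift_eq_self)
    then show ?thesis using shift[OF that] by (metis image_eqI)
  qed
  then show ?thesis using shift by blast
qed

text \<open>The set of roots is closed under squaring, so the coefficients are fixed by the Frobenius.\<close>
lemma coeff_prod_binary:
  "coeff (\<Prod>E\<in>odd_shift_sets. [:1, - (\<alpha> ^ set_encode E):]) k = 0 \<or>
   coeff (\<Prod>E\<in>odd_shift_sets. [:1, - (\<alpha> ^ set_encode E):]) k = 1"
proof (rule eq_0_or_1_if_square_eq)
  let ?P = "\<Prod>E\<in>odd_shift_sets. [:1, \<alpha> ^ set_encode E:]"
  have P: "(\<Prod>E\<in>odd_shift_sets. [:1, - (\<alpha> ^ set_encode E):]) = ?P"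
    by (simp add: char2_minus_eq[OF char2])
  have inj: "inj_on (cyclic_shift m 1) odd_shift_sets"
    by (rule inj_on_subset[OF inj_on_cyclic_shift]) (use m_pos odd_shift_sets_subset in auto)
  have "map_poly (\<lambda>x. x ^ 2) ?P = (\<Prod>E\<in>odd_shift_sets. [:1, (\<alpha> ^ set_encode E) ^ 2:])"
    by (simp add: char2_map_poly_square_prod[OF char2] map_poly_pCons)
  also have "\<dots> = (\<Prod>E\<in>odd_shift_sets. [:1, \<alpha> ^ set_encode (cyclic_shift m 1 E):])"
    using power_set_encode_cyclic_shift[OF card_UNIV] odd_shift_sets_subset
    by (intro prod.cong) auto
  also have "\<dots> = ?P"
    using prod.reindex[OF inj, of "\<lambda>E. [:1, \<alpha> ^ set_encode E:]",
        unfolded cyclic_shift_odd_shift_sets] by (simp add: o_def)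
  finally have "map_poly (\<lambda>x. x ^ 2) ?P = ?P" .
  then show "coeff (\<Prod>E\<in>odd_shift_sets. [:1, - (\<alpha> ^ set_encode E):]) k ^ 2 =
      coeff (\<Prod>E\<in>odd_shift_sets. [:1, - (\<alpha> ^ set_encode E):]) k"
    unfolding P by (metis (no_types, lifting) coeff_map_poly power_zero_numeral)
qed

lemma degree_min_poly_trace_seq:
  assumes "is_min_poly (trace_seq m (\<lambda>x. x ^ set_encode D) \<alpha>) g"
  shows "degree g = card odd_shift_sets"
  using degree_min_poly[OF assms] coeff_prod_binary by blast

end

section \<open>Shift classes for the exponent \<open>2 ^ (2 h) - 2 ^ h + 1\<close>\<close>

lemma card_pair_supersets:
  assumes "finite X" "a \<notin> X" "b \<notin> X"
  shows "card {K. K \<subseteq> insert a (insert b X) \<and> a \<in> K \<and> b \<in> K \<and> K \<noteq> {a, b}} = 2 ^ card X - 1"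
proof -
  let ?f = "\<lambda>B. insert a (insert b B)"
  have "{K. K \<subseteq> insert a (insert b X) \<and> a \<in> K \<and> b \<in> K \<and> K \<noteq> {a, b}} = ?f ` (Pow X - {{}})"
  proof (intro equalityI subsetI)
    fix K assume K: "K \<in> {K. K \<subseteq> insert a (insert b X) \<and> a \<in> K \<and> b \<in> K \<and> K \<noteq> {a, b}}"
    then have "K = ?f (K - {a, b})" "K - {a, b} \<in> Pow X - {{}}" by auto
    then show "K \<in> ?f ` (Pow X - {{}})" by blast
  next
    fix K assume "K \<in> ?f ` (Pow X - {{}})"
    then obtain B where "B \<subseteq> X" "B \<noteq> {}" "K = ?f B" by auto
    then show "K \<in> {K. K \<subseteq> insert a (insert b X) \<and> a \<in> K \<and> b \<in> K \<and> K \<noteq> {a, b}}"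
      using assms(2,3) by auto
  qed
  moreover have "inj_on ?f (Pow X - {{}})"
  proof (rule inj_onI)
    fix B C assume "B \<in> Pow X - {{}}" "C \<in> Pow X - {{}}" "?f B = ?f C"
    then have "?f B - {a, b} = ?f C - {a, b}" by simp
    then show "B = C" using \<open>B \<in> Pow X - {{}}\<close> \<open>C \<in> Pow X - {{}}\<close> assms by auto
  qed
  ultimately show ?thesis using assms by (simp add: card_image card_Pow card_Diff_singleton)
qed

lemma card_subsets_lessThan_containing_0:
  assumes "n > 0"
  shows "card {K. K \<subseteq> {..<n} \<and> 0 \<in> K} = 2 ^ (n - 1)"
proof -
  have "{K. K \<subseteq> {..<n} \<and> 0 \<in> K} = insert 0 ` Pow {1..<n}"
  proof (intro equalityI subsetI)
    fix K assume K: "K \<in> {K. K \<subseteq> {..<n} \<and> 0 \<in> K}"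
    then have "K = insert 0 (K - {0})" "K - {0} \<in> Pow {1..<n}" by auto
    then show "K \<in> insert 0 ` Pow {1..<n}" by blast
  qed (use assms in auto)
  moreover have "inj_on (insert 0) (Pow {1..<n})"
    by (rule inj_onI) (metis Diff_insert_absorb PowD atLeastLessThan_iff not_one_le_zero subsetD)
  ultimately show ?thesis by (simp add: card_image card_Pow)
qed

lemma card_half_if_involution_swaps:
  assumes "finite A" "\<And>x. x \<in> A \<Longrightarrow> f x \<in> A" "\<And>x. x \<in> A \<Longrightarrow> f (f x) = x"
    "\<And>x. x \<in> A \<Longrightarrow> P (f x) \<longleftrightarrow> \<not> P x"
  shows "2 * card {x \<in> A. P x} = card A"
proof -
  have "bij_betw f {x \<in> A. P x} {x \<in> A. \<not> P x}"
    by (rule bij_betw_byWitness[where f'=f]) (use assms in auto)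
  then have "card {x \<in> A. P x} = card {x \<in> A. \<not> P x}" by (rule bij_betw_same_card)
  moreover have "card A = card {x \<in> A. P x} + card {x \<in> A. \<not> P x}"
    using assms(1) by (subst card_Un_disjoint[symmetric]) (auto intro: arg_cong[where f=card])
  ultimately show ?thesis by simp
qed

definition toggle_below_max :: "nat set \<Rightarrow> nat set" where
  "toggle_below_max K = (if Max K - 1 \<in> K then K - {Max K - 1} else insert (Max K - 1) K)"

lemma toggle_below_max:
  assumes K: "finite K" "0 \<in> K" "Max K \<ge> 2"
  shows "Max (toggle_below_max K) = Max K" "0 \<in> toggle_below_max K"
    "toggle_below_max K \<subseteq> {..Max K}" "toggle_below_max (toggle_below_max K) = K"
    "Max K - 1 \<in> toggle_below_max K \<longleftrightarrow> Max K - 1 \<notin> K"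
proof -
  have MK: "Max K \<in> K" using K Max_in by blast
  have le: "\<And>k. k \<in> K \<Longrightarrow> k \<le> Max K" using K by simp
  show M: "Max (toggle_below_max K) = Max K"
    by (rule Max_eqI) (use K MK le in \<open>auto simp: toggle_below_max_def split: if_splits\<close>)
  show "0 \<in> toggle_below_max K" "toggle_below_max K \<subseteq> {..Max K}"
    using K le unfolding toggle_below_max_def by auto
  show "Max K - 1 \<in> toggle_below_max K \<longleftrightarrow> Max K - 1 \<notin> K"
    unfolding toggle_below_max_def by auto
  show "toggle_below_max (toggle_below_max K) = K"
    using M unfolding toggle_below_max_def[of "toggle_below_max K"]
    by (auto simp: toggle_below_max_def split: if_splits)
qed

locale kasami_exponent =
  fixes h m :: nat
  assumes h_ge_3: "3 \<le> h" and m_eq: "m = 2 * h + 1"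
begin

definition digits :: "nat set" where
  "digits = insert 0 {h..<2 * h}"

text \<open>Shift counts are computed with respect to \<open>window\<close>, the shift of \<open>digits\<close> by \<open>h + 1\<close>:
  it is an initial segment of \<open>{..<m}\<close> up to the single gap at \<open>h\<close>.\<close>
definition window :: "nat set" where
  "window = {..<h} \<union> {h + 1}"

lemma m_pos: "m > 0"
  using m_eq by simp

lemma set_encode_digits: "set_encode digits = 2 ^ (2 * h) - 2 ^ h + 1"
proof -
  have "sum ((^) (2::nat)) ({..<h} \<union> {h..<2 * h}) = sum ((^) 2) {..<h} + sum ((^) 2) {h..<2 * h}"
    by (rule sum.union_disjoint) auto
  moreover have "{..<h} \<union> {h..<2 * h} = {..<2 * h}" by auto
  ultimately have "set_encode {h..<2 * h} = set_encode {..<2 * h} - set_encode {..<h}"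
    unfolding set_encode_def by simp
  also have "\<dots> = 2 ^ (2 * h) - 2 ^ h"
    using set_encode_lessThan[of "2 * h"] set_encode_lessThan[of h] by simp
  finally show ?thesis using h_ge_3 unfolding digits_def by simp
qed

lemma digits_subset: "digits \<subseteq> {..<m}"
  unfolding digits_def using m_eq by auto

lemma digits_proper: "digits \<noteq> {..<m}"
proof -
  have "1 \<notin> digits" using h_ge_3 unfolding digits_def by auto
  moreover have "1 \<in> {..<m}" using m_eq h_ge_3 by simp
  ultimately show ?thesis by blast
qed

lemma window_subset: "window \<subseteq> {..<m}"
  using m_eq window_def h_ge_3 by auto

lemma mem_window_iff: "x \<in> window \<longleftrightarrow> x < h \<or> x = h + 1"
  using window_def by auto

lemma shifts_into_window_iff:
  "t \<in> shifts_into m window K \<longleftrightarrow> t < m \<and> (\<forall>k\<in>K. (k + t) mod m < h \<or> (k + t) mod m = h + 1)"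
  unfolding shifts_into_def cyclic_shift_subset_iff window_def by auto

lemma shifts_into_window_of_1_h1:
  assumes K: "K \<subseteq> window" "0 \<notin> K" "1 \<in> K" "h+1 \<in> K" "K \<noteq> {1, h+1}"
  shows "shifts_into m window K = {0}"
proof
  have "cyclic_shift m 0 K = K" using K(1) window_subset by (intro cyclic_shift_0) auto
  then show "{0} \<subseteq> shifts_into m window K" using K m_eq unfolding shifts_into_def by auto
  show "shifts_into m window K \<subseteq> {0}"
  proof
    fix t assume t: "t \<in> shifts_into m window K"
    then have tm: "t < m" and all: "\<forall>k\<in>K. (k + t) mod m < h \<or> (k + t) mod m = h + 1"
      by (auto simp: shifts_into_window_iff)
    have a1: "(1 + t) mod m < h \<or> (1 + t) mod m = h + 1" using all K by auto
    have a2: "(h + 1 + t) mod m < h \<or> (h + 1 + t) mod m = h + 1" using all K by auto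
    have e1: "(1 + t) mod m = (if 1 + t < m then 1 + t else 1 + t - m)"
      by (rule mod_if_less_double) (use tm m_eq in auto)
    have e2: "(h + 1 + t) mod m = (if h + 1 + t < m then h + 1 + t else h + 1 + t - m)"
      by (rule mod_if_less_double) (use tm m_eq in auto)
    have "t = 0 \<or> t = h"
      using a1 a2 e1 e2 tm m_eq h_ge_3 by (auto split: if_splits)
    moreover have "t \<noteq> h"
    proof
      assume th: "t = h"
      obtain k where k: "k \<in> K" "k \<noteq> 1" "k \<noteq> h + 1"
      proof -
        have "\<not> K \<subseteq> {1, h+1}" using K by blast
        then show ?thesis using that by blast
      qed
      have "k < h" "k \<noteq> 0" using k K window_def by auto
      then have "(k + t) mod m = k + h" using th m_eq by simp
      then show False using all k th \<open>k < h\<close> \<open>k \<noteq> 0\<close> by force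
    qed
    ultimately show "t \<in> {0}" by simp
  qed
qed

lemma shifts_into_window_of_0_h1:
  assumes K: "K \<subseteq> window" "0 \<in> K" "h+1 \<in> K" "K \<noteq> {0, h+1}"
  shows "shifts_into m window K = {0}"
proof
  have "cyclic_shift m 0 K = K" using K(1) window_subset by (intro cyclic_shift_0) auto
  then show "{0} \<subseteq> shifts_into m window K" using K m_eq unfolding shifts_into_def by auto
  show "shifts_into m window K \<subseteq> {0}"
  proof
    fix t assume t: "t \<in> shifts_into m window K"
    then have tm: "t < m" and all: "\<forall>k\<in>K. (k + t) mod m < h \<or> (k + t) mod m = h + 1"
      by (auto simp: shifts_into_window_iff)
    have a1: "t mod m < h \<or> t mod m = h + 1" using all K by force
    have a2: "(h + 1 + t) mod m < h \<or> (h + 1 + t) mod m = h + 1" using all K by auto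
    have e2: "(h + 1 + t) mod m = (if h + 1 + t < m then h + 1 + t else h + 1 + t - m)"
      by (rule mod_if_less_double) (use tm m_eq in auto)
    have "t = 0 \<or> t = h + 1"
      using a1 a2 e2 tm m_eq h_ge_3 by (auto split: if_splits)
    moreover have "t \<noteq> h + 1"
    proof
      assume th: "t = h + 1"
      obtain k where k: "k \<in> K" "k \<noteq> 0" "k \<noteq> h + 1"
      proof -
        have "\<not> K \<subseteq> {0, h+1}" using K by blast
        then show ?thesis using that by blast
      qed
      have "k < h" using k K window_def by auto
      then have "(k + t) mod m = k + h + 1" using th m_eq by simp
      then show False using all k th \<open>k < h\<close> by force
    qed
    ultimately show "t \<in> {0}" by simp
  qed
qed

lemma shifts_into_window_0_h1: "shifts_into m window {0, h+1} = {0, h+1}"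
proof -
  have "h + 1 + (h + 1) = m + 1" using m_eq by simp
  then have "(h + 1 + (h + 1)) mod m = (m + 1) mod m" by simp
  also have "\<dots> = 1 mod m" by (simp only: mod_add_self1)
  also have "\<dots> = 1" using m_eq h_ge_3 by simp
  finally have "(h + 1 + (h + 1)) mod m = 1" .
  then have "h + 1 \<in> shifts_into m window {0, h+1}" unfolding shifts_into_window_iff using m_eq h_ge_3 by simp
  moreover have "shifts_into m window {0, h+1} \<subseteq> {0, h+1}"
  proof
    fix t assume t: "t \<in> shifts_into m window {0, h+1}"
    then have tm: "t < m" and all: "\<forall>k\<in>{0,h+1}. (k + t) mod m < h \<or> (k + t) mod m = h + 1"
      by (auto simp: shifts_into_window_iff)
    have a1: "t mod m < h \<or> t mod m = h + 1" using all by force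
    have a2: "(h + 1 + t) mod m < h \<or> (h + 1 + t) mod m = h + 1" using all by auto
    have e2: "(h + 1 + t) mod m = (if h + 1 + t < m then h + 1 + t else h + 1 + t - m)"
      by (rule mod_if_less_double) (use tm m_eq in auto)
    show "t \<in> {0, h+1}"
      using a1 a2 e2 tm m_eq h_ge_3 by (auto split: if_splits)
  qed
  moreover have "0 \<in> shifts_into m window {0, h+1}" unfolding shifts_into_window_iff using m_eq h_ge_3 by simp
  ultimately show ?thesis by blast
qed

lemma shifts_into_window_1_h1: "shifts_into m window {1, h+1} = {0, h}"
proof -
  have "h + 1 + h = m" using m_eq by simp
  then have "(h + 1 + h) mod m = 0" by simp
  then have "h \<in> shifts_into m window {1, h+1}" unfolding shifts_into_window_iff using m_eq h_ge_3 by simp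
  moreover have "shifts_into m window {1, h+1} \<subseteq> {0, h}"
  proof
    fix t assume t: "t \<in> shifts_into m window {1, h+1}"
    then have tm: "t < m" and all: "\<forall>k\<in>{1,h+1}. (k + t) mod m < h \<or> (k + t) mod m = h + 1"
      by (auto simp: shifts_into_window_iff)
    have a1: "(1 + t) mod m < h \<or> (1 + t) mod m = h + 1" using all by force
    have a2: "(h + 1 + t) mod m < h \<or> (h + 1 + t) mod m = h + 1" using all by auto
    have e1: "(1 + t) mod m = (if 1 + t < m then 1 + t else 1 + t - m)"
      by (rule mod_if_less_double) (use tm m_eq in auto)
    have e2: "(h + 1 + t) mod m = (if h + 1 + t < m then h + 1 + t else h + 1 + t - m)"
      by (rule mod_if_less_double) (use tm m_eq in auto)
    show "t \<in> {0, h}"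
      using a1 a2 e1 e2 tm m_eq h_ge_3 by (auto split: if_splits)
  qed
  moreover have "0 \<in> shifts_into m window {1, h+1}" unfolding shifts_into_window_iff using m_eq h_ge_3 by simp
  ultimately show ?thesis by blast
qed

lemma shifts_into_window_0: "shifts_into m window {0} = window"
proof -
  have "shifts_into m window {0} = {t. t < m \<and> t mod m \<in> window}" unfolding shifts_into_def cyclic_shift_subset_iff by simp
  also have "\<dots> = window" using window_subset by auto
  finally show ?thesis .
qed

lemma shifts_into_window_low_subset:
  assumes K: "K \<subseteq> {..<h}" "0 \<in> K" "Max K \<ge> 1"
  shows "shifts_into m window K \<subseteq> {..h - 1 - Max K} \<union> (if Max K - 1 \<notin> K then {h + 1 - Max K} else {})"
proof
  let ?M = "Max K"
  have MK: "?M \<in> K" and Mh: "?M < h" using K finite_subset[OF K(1)] Max_in by blast+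
  fix t assume "t \<in> shifts_into m window K"
  then have tm: "t < m" and all: "\<forall>k\<in>K. (k + t) mod m < h \<or> (k + t) mod m = h + 1"
    by (auto simp: shifts_into_window_iff)
  have a1: "t mod m < h \<or> t mod m = h + 1" using all K by force
  have a2: "(?M + t) mod m < h \<or> (?M + t) mod m = h + 1" using all MK by auto
  have e2: "(?M + t) mod m = (if ?M + t < m then ?M + t else ?M + t - m)"
    by (rule mod_if_less_double) (use tm m_eq Mh in auto)
  have tl: "t < h" using a1 a2 e2 tm m_eq Mh K(3) by (auto split: if_splits)
  have "t \<le> h - 1 - ?M \<or> (t = h + 1 - ?M)" using a2 tl Mh m_eq by auto
  moreover have "?M - 1 \<notin> K" if "t = h + 1 - ?M"
  proof
    assume "?M - 1 \<in> K"
    then have "(?M - 1 + t) mod m < h \<or> (?M - 1 + t) mod m = h + 1" using all by auto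
    moreover have "?M - 1 + t = h" using that K(3) Mh by auto
    ultimately show False using m_eq by simp
  qed
  ultimately show "t \<in> {..h - 1 - ?M} \<union> (if ?M - 1 \<notin> K then {h + 1 - ?M} else {})"
    by auto
qed

lemma shifts_into_window_low_supset:
  assumes K: "K \<subseteq> {..<h}" "0 \<in> K" "Max K \<ge> 1"
  shows "{..h - 1 - Max K} \<union> (if Max K - 1 \<notin> K then {h + 1 - Max K} else {}) \<subseteq> shifts_into m window K"
proof
  let ?M = "Max K"
  have fin: "finite K" using K(1) finite_subset by blast
  have Mh: "?M < h" using K fin Max_in by blast
  have leM: "k \<le> ?M" if "k \<in> K" for k using fin that by simp
  fix t assume t: "t \<in> {..h - 1 - ?M} \<union> (if ?M - 1 \<notin> K then {h + 1 - ?M} else {})"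
  show "t \<in> shifts_into m window K"
  proof (cases "t \<le> h - 1 - ?M")
    case True
    have "(k + t) mod m < h" if "k \<in> K" for k
    proof -
      have "k + t < h" using leM[OF that] Mh True by linarith
      then show ?thesis using m_eq by simp
    qed
    then show ?thesis unfolding shifts_into_window_iff using True Mh m_eq by auto
  next
    case False
    then have tt: "t = h + 1 - ?M" and nK: "?M - 1 \<notin> K" using t by (auto split: if_splits)
    have "?M \<ge> 2" using nK K(2) K(3) by (cases "?M = 1") auto
    then have "(k + t) mod m < h \<or> (k + t) mod m = h + 1" if "k \<in> K" for k
      using that leM[OF that] nK tt Mh m_eq by (cases "k = ?M"; cases "k = ?M - 1") auto
    then show ?thesis unfolding shifts_into_window_iff using tt Mh m_eq by auto
  qed
qed

lemma shifts_into_window_low: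
  assumes "K \<subseteq> {..<h}" "0 \<in> K" "Max K \<ge> 1"
  shows "shifts_into m window K = {..h - 1 - Max K} \<union> (if Max K - 1 \<notin> K then {h + 1 - Max K} else {})"
  using shifts_into_window_low_subset[OF assms] shifts_into_window_low_supset[OF assms] by blast

text \<open>Canonical representatives of the shift classes of sets that shift into \<open>window\<close>.\<close>
definition normal_window_set :: "nat set \<Rightarrow> bool" where
  "normal_window_set K \<longleftrightarrow> K \<subseteq> window \<and> (0 \<in> K \<or> (1 \<in> K \<and> h + 1 \<in> K)) \<and> K \<noteq> {1, h + 1}"

lemma normal_window_set_subset: "normal_window_set K \<Longrightarrow> K \<subseteq> {..<m}"
  using window_subset unfolding normal_window_set_def by auto

lemma normal_shift_keeps_0:
  assumes K: "normal_window_set K" "0 \<in> K" and K': "normal_window_set K'"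
    and p: "p < m" and eq: "cyclic_shift m p K = K'"
  shows "0 \<in> K'"
proof (rule ccontr)
  assume "0 \<notin> K'"
  then have K'1: "1 \<in> K'" "h + 1 \<in> K'" "K' \<subseteq> window" using K' unfolding normal_window_set_def by auto
  have KD: "K \<subseteq> window" using K unfolding normal_window_set_def by auto
  have "p \<in> K'" using cyclic_shift_memI[OF K(2), of p m] eq p by simp
  then have pD: "p < h \<or> p = h + 1" using K'1 mem_window_iff by auto
  obtain k1 where k1: "k1 \<in> K" "(k1 + p) mod m = 1" using cyclic_shift_memE[of 1 m p K] eq K'1 by auto
  obtain kh where kh: "kh \<in> K" "(kh + p) mod m = h + 1" using cyclic_shift_memE[of "h+1" m p K] eq K'1 by auto
  have k1D: "k1 < h \<or> k1 = h + 1" using k1 KD mem_window_iff by auto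
  have khD: "kh < h \<or> kh = h + 1" using kh KD mem_window_iff by auto
  have e1: "(k1 + p) mod m = (if k1 + p < m then k1 + p else k1 + p - m)"
    by (rule mod_if_less_double) (use k1D p m_eq in auto)
  have e2: "(kh + p) mod m = (if kh + p < m then kh + p else kh + p - m)"
    by (rule mod_if_less_double) (use khD p m_eq in auto)
  show False
  proof (cases "p = h + 1")
    case True
    have "\<not> K' \<subseteq> {1, h+1}" using K' unfolding normal_window_set_def by auto
    then obtain k' where k': "k' \<in> K'" "k' \<noteq> 1" "k' \<noteq> h + 1" by blast
    obtain k where k: "k \<in> K" "k' = (k + p) mod m" using cyclic_shift_memE[of k' m p K] eq k' by auto
    have kD: "k < h \<or> k = h + 1" using k KD mem_window_iff by auto
    have k'D: "k' < h" using k' K'1 mem_window_iff by auto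
    have e: "(k + p) mod m = (if k + p < m then k + p else k + p - m)"
      by (rule mod_if_less_double) (use kD p m_eq in auto)
    show False using e k kD k'D k' True m_eq by (auto split: if_splits)
  next
    case False
    then have "p < h" using pD by simp
    moreover have "p \<noteq> 0" using \<open>p \<in> K'\<close> \<open>0 \<notin> K'\<close> by metis
    ultimately show False using e1 e2 k1 kh k1D khD m_eq h_ge_3 by (auto split: if_splits)
  qed
qed

lemma normal_shift_eq_0:
  assumes K: "normal_window_set K" and K': "normal_window_set K'"
    and p: "p < m" and eq: "cyclic_shift m p K = K'"
  shows "p = 0"
proof (rule ccontr)
  assume p0: "p \<noteq> 0"
  have KD: "K \<subseteq> window" and K'D: "K' \<subseteq> window" using K K' unfolding normal_window_set_def by auto
  have eq': "cyclic_shift m (m - p) K' = K"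
    using eq cyclic_shift_inverse[OF normal_window_set_subset[OF K], of p] p by simp
  have "0 \<in> K \<longleftrightarrow> 0 \<in> K'"
    using normal_shift_keeps_0[OF K _ K' p eq] normal_shift_keeps_0[OF K' _ K _ eq'] p0 p by auto
  then consider "0 \<in> K" "0 \<in> K'" | "0 \<notin> K" "0 \<notin> K'" by blast
  then show False
  proof cases
    case 1
    have "p \<in> K'" using cyclic_shift_memI[OF 1(1), of p m] eq p by simp
    then have pD: "p < h \<or> p = h + 1" using K'D mem_window_iff by auto
    obtain k where k: "k \<in> K" "(k + p) mod m = 0" using cyclic_shift_memE[of 0 m p K] eq 1 by auto
    have kD: "k < h \<or> k = h + 1" using k KD mem_window_iff by auto
    have e: "(k + p) mod m = (if k + p < m then k + p else k + p - m)"
      by (rule mod_if_less_double) (use kD p m_eq in auto)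
    show False using e k kD pD p0 m_eq by (auto split: if_splits)
  next
    case 2
    have K1: "1 \<in> K" "h + 1 \<in> K" using K 2 unfolding normal_window_set_def by auto
    have a1: "(1 + p) mod m \<in> K'" "(h + 1 + p) mod m \<in> K'"
      using cyclic_shift_memI[OF K1(1), of p m] cyclic_shift_memI[OF K1(2), of p m] eq by auto
    have b0: "(1 + p) mod m \<noteq> 0" "(h + 1 + p) mod m \<noteq> 0"
      using a1 2 by metis+
    have b: "(1 + p) mod m < h \<or> (1 + p) mod m = h + 1" "(h + 1 + p) mod m < h \<or> (h + 1 + p) mod m = h + 1"
      using a1 K'D mem_window_iff by auto
    have e1: "(1 + p) mod m = (if 1 + p < m then 1 + p else 1 + p - m)"
      by (rule mod_if_less_double) (use p m_eq in auto)
    have e2: "(h + 1 + p) mod m = (if h + 1 + p < m then h + 1 + p else h + 1 + p - m)"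
      by (rule mod_if_less_double) (use p m_eq in auto)
    show False using b b0 e1 e2 p p0 m_eq h_ge_3 by (auto split: if_splits)
  qed
qed

lemma exists_normal_shift_aux:
  assumes K: "K \<subseteq> window" "0 \<notin> K" "K \<noteq> {}" "K \<noteq> {h + 1}"
  shows "\<exists>u<m. cyclic_shift m u K \<subseteq> window \<and> (0 \<in> cyclic_shift m u K \<or> (1 \<in> cyclic_shift m u K \<and> h + 1 \<in> cyclic_shift m u K))"
proof -
  let ?a = "Min K"
  have fin: "finite K" using K(1) unfolding window_def by (rule finite_subset) simp
  have aK: "?a \<in> K" using fin K(3) Min_in by blast
  have ale: "?a \<le> k" if "k \<in> K" for k using fin that by simp
  have a0: "?a \<noteq> 0" using aK K(2) by metis
  have ah: "?a < h"
  proof (rule ccontr)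
    assume "\<not> ?a < h"
    then have "?a = h + 1" using aK K(1) window_def by auto
    then have "K \<subseteq> {h + 1}" using ale K(1) window_def by force
    then show False using K(3,4) by (metis subset_singletonD)
  qed
  show ?thesis
  proof (cases "?a = 1 \<and> h + 1 \<in> K")
    case True
    then show ?thesis using cyclic_shift_0 window_subset K(1) aK m_eq by (intro exI[of _ 0]) auto
  next
    case False
    have img: "cyclic_shift m (m - ?a) K = (\<lambda>k. k - ?a) ` K"
      using K(1) window_subset ale by (intro cyclic_shift_diff) auto
    \<comment> \<open>subtracting the minimum keeps \<open>K\<close> inside \<open>window\<close>, unless it moves \<open>h + 1\<close> onto the gap \<open>h\<close>\<close>
    have "k - ?a \<in> window" if "k \<in> K" for k
      using that K(1) False a0 ah ale[OF that] unfolding window_def by auto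
    moreover have "0 \<in> (\<lambda>k. k - ?a) ` K" using aK by force
    moreover have "m - ?a < m" using a0 ah m_eq by simp
    ultimately show ?thesis using img by (intro exI[of _ "m - ?a"]) auto
  qed
qed

lemma exists_normal_shift:
  assumes K: "K \<subseteq> window" "K \<noteq> {}"
  shows "\<exists>u<m. cyclic_shift m u K \<subseteq> window \<and> (0 \<in> cyclic_shift m u K \<or> (1 \<in> cyclic_shift m u K \<and> h + 1 \<in> cyclic_shift m u K))"
proof (cases "0 \<in> K")
  case True
  then show ?thesis using cyclic_shift_0 window_subset K m_pos by (intro exI[of _ 0]) auto
next
  case False
  show ?thesis
  proof (cases "K = {h + 1}")
    case True
    have "(h + 1 + h) mod m = 0" using m_eq by (simp add: mult_2)
    then have "cyclic_shift m h K = {0}" using True unfolding cyclic_shift_def by simp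
    then show ?thesis using m_eq window_def h_ge_3 by (intro exI[of _ h]) auto
  qed (use exists_normal_shift_aux K False in blast)
qed

lemma shift_count_window_1_h1: "shift_count m window {1, h + 1} = 2"
  using shifts_into_window_1_h1 h_ge_3 unfolding shift_count_def by simp

lemma odd_window_sets_eq_image:
  "{E. E \<subseteq> {..<m} \<and> E \<noteq> {} \<and> odd (shift_count m window E)}
     = (\<lambda>(t, K). cyclic_shift m t K) ` ({..<m} \<times> {K. normal_window_set K \<and> odd (shift_count m window K)})"
proof (intro equalityI subsetI)
  fix E assume "E \<in> {E. E \<subseteq> {..<m} \<and> E \<noteq> {} \<and> odd (shift_count m window E)}"
  then have E: "E \<subseteq> {..<m}" "E \<noteq> {}" "odd (shift_count m window E)" by auto
  then have "shifts_into m window E \<noteq> {}" unfolding shift_count_def by (metis card.empty even_zero)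
  then obtain t0 where t0: "t0 < m" "cyclic_shift m t0 E \<subseteq> window"
    unfolding shifts_into_def by blast
  obtain u where u: "u < m" "cyclic_shift m u (cyclic_shift m t0 E) \<subseteq> window"
    "0 \<in> cyclic_shift m u (cyclic_shift m t0 E) \<or> (1 \<in> cyclic_shift m u (cyclic_shift m t0 E) \<and> h + 1 \<in> cyclic_shift m u (cyclic_shift m t0 E))"
    using exists_normal_shift[OF t0(2)] E(2) cyclic_shift_empty_iff by auto
  define K where "K = cyclic_shift m u (cyclic_shift m t0 E)"
  have cK: "shift_count m window K = shift_count m window E"
    unfolding K_def by (simp add: shift_count_cyclic_shift[OF m_pos])
  then have "K \<noteq> {1, h + 1}" using E(3) shift_count_window_1_h1 by auto
  then have RK: "normal_window_set K" using u unfolding normal_window_set_def K_def by auto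
  obtain c where c: "c < m" "cyclic_shift m c K = E"
    using exists_cyclic_shift_inverse[OF m_pos E(1)] unfolding K_def by (metis cyclic_shift_cyclic_shift)
  show "E \<in> (\<lambda>(t, K). cyclic_shift m t K) ` ({..<m} \<times> {K. normal_window_set K \<and> odd (shift_count m window K)})"
    using c RK cK E(3) by (intro image_eqI[of _ _ "(c, K)"]) auto
next
  fix E assume "E \<in> (\<lambda>(t, K). cyclic_shift m t K) ` ({..<m} \<times> {K. normal_window_set K \<and> odd (shift_count m window K)})"
  then obtain t K where tK: "t < m" "normal_window_set K" "odd (shift_count m window K)" "E = cyclic_shift m t K"
    by auto
  have "K \<noteq> {}" using tK(2) unfolding normal_window_set_def by auto
  then show "E \<in> {E. E \<subseteq> {..<m} \<and> E \<noteq> {} \<and> odd (shift_count m window E)}"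
    using tK cyclic_shift_subset_lessThan[OF m_pos]
    by (simp add: shift_count_cyclic_shift[OF m_pos] cyclic_shift_empty_iff)
qed

lemma inj_on_cyclic_shift_normal:
  "inj_on (\<lambda>(t, K). cyclic_shift m t K) ({..<m} \<times> {K. normal_window_set K \<and> odd (shift_count m window K)})"
proof (rule inj_onI, clarify)
  fix t K t' K'
  assume t: "t < m" "t' < m" and K: "normal_window_set K" "normal_window_set K'"
    and eq: "cyclic_shift m t K = cyclic_shift m t' K'"
  let ?p = "(m - t + t') mod m"
  have "K = cyclic_shift m (m - t) (cyclic_shift m t K)"
    using cyclic_shift_inverse[OF normal_window_set_subset[OF K(1)], of t] t by simp
  also have "\<dots> = cyclic_shift m ?p K'" using eq by (simp add: cyclic_shift_mod)
  finally have "cyclic_shift m ?p K' = K" by simp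
  then have p0: "?p = 0" using normal_shift_eq_0[OF K(2) K(1)] m_pos by simp
  then have "t = t'" using t by (simp add: mod_if_less_double split: if_splits)
  then show "t = t' \<and> K = K'"
    using p0 \<open>cyclic_shift m ?p K' = K\<close> cyclic_shift_0[OF normal_window_set_subset[OF K(2)]] by auto
qed

lemma card_odd_window_sets_eq:
  "card {E. E \<subseteq> {..<m} \<and> E \<noteq> {} \<and> odd (shift_count m window E)}
    = m * card {K. normal_window_set K \<and> odd (shift_count m window K)}"
  unfolding odd_window_sets_eq_image
  by (simp add: card_image[OF inj_on_cyclic_shift_normal] card_cartesian_product)

definition sets_0_top :: "nat set set" where
  "sets_0_top = {K. K \<subseteq> insert 0 (insert (h + 1) {1..<h}) \<and> 0 \<in> K \<and> h + 1 \<in> K \<and> K \<noteq> {0, h + 1}}"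

definition sets_1_top :: "nat set set" where
  "sets_1_top = {K. K \<subseteq> insert 1 (insert (h + 1) {2..<h}) \<and> 1 \<in> K \<and> h + 1 \<in> K \<and> K \<noteq> {1, h + 1}}"

definition low_sets :: "nat set set" where
  "low_sets = {K. K \<subseteq> {..<h} \<and> 0 \<in> K}"

lemma sets_0_top_subset_window: "K \<in> sets_0_top \<Longrightarrow> K \<subseteq> window"
  using h_ge_3 unfolding sets_0_top_def window_def by (auto simp: subset_iff)

lemma sets_1_top_subset_window:
  assumes "K \<in> sets_1_top"
  shows "K \<subseteq> window"
proof -
  have "insert 1 (insert (h + 1) {2..<h}) \<subseteq> window" unfolding window_def using h_ge_3 by auto
  then show ?thesis using assms unfolding sets_1_top_def by blast
qed

lemma shift_count_sets_0_top: "K \<in> sets_0_top \<Longrightarrow> shift_count m window K = 1"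
  using sets_0_top_subset_window shifts_into_window_of_0_h1[of K]
  unfolding sets_0_top_def shift_count_def by simp

lemma shift_count_sets_1_top:
  assumes "K \<in> sets_1_top"
  shows "shift_count m window K = 1"
proof -
  have "0 \<notin> K" using assms unfolding sets_1_top_def by auto
  then show ?thesis
    using assms sets_1_top_subset_window shifts_into_window_of_1_h1[of K]
    unfolding sets_1_top_def shift_count_def by simp
qed

lemma shift_count_window_0_h1: "shift_count m window {0, h + 1} = 2"
  using shifts_into_window_0_h1 h_ge_3 unfolding shift_count_def by simp

lemma card_sets_0_top: "card sets_0_top = 2 ^ (h - 1) - 1"
  using card_pair_supersets[of "{1..<h}" 0 "h + 1"] unfolding sets_0_top_def by simp

lemma card_sets_1_top: "card sets_1_top = 2 ^ (h - 2) - 1"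
  using card_pair_supersets[of "{2..<h}" 1 "h + 1"] unfolding sets_1_top_def by simp

lemma normal_odd_sets_subset:
  "{K. normal_window_set K \<and> odd (shift_count m window K)}
    \<subseteq> sets_0_top \<union> sets_1_top \<union> {K \<in> low_sets. odd (shift_count m window K)}"
proof
  fix K assume "K \<in> {K. normal_window_set K \<and> odd (shift_count m window K)}"
  then have K: "K \<subseteq> window" "0 \<in> K \<or> (1 \<in> K \<and> h + 1 \<in> K)" "K \<noteq> {1, h + 1}"
    "odd (shift_count m window K)"
    unfolding normal_window_set_def by auto
  consider "0 \<in> K" "h + 1 \<in> K" | "0 \<in> K" "h + 1 \<notin> K" | "0 \<notin> K" by blast
  then show "K \<in> sets_0_top \<union> sets_1_top \<union> {K \<in> low_sets. odd (shift_count m window K)}"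
  proof cases
    case 1
    then have "K \<noteq> {0, h + 1}" using K(4) shift_count_window_0_h1 by auto
    moreover have "K \<subseteq> insert 0 (insert (h + 1) {1..<h})" using K(1) unfolding window_def by auto
    ultimately show ?thesis using 1 unfolding sets_0_top_def by auto
  next
    case 2
    then have "K \<subseteq> {..<h}" using K(1) window_def by auto
    then show ?thesis using K 2 unfolding low_sets_def by auto
  next
    case 3
    have "K \<subseteq> insert 1 (insert (h + 1) {2..<h})"
    proof
      fix x assume x: "x \<in> K"
      then have "x < h \<or> x = h + 1" using K(1) unfolding window_def by auto
      moreover have "x \<noteq> 0" using x 3 by metis
      ultimately show "x \<in> insert 1 (insert (h + 1) {2..<h})" by auto
    qed
    then show ?thesis using K 3 unfolding sets_1_top_def by auto
  qed
qed

lemma normal_odd_sets_supset: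
  "sets_0_top \<union> sets_1_top \<union> {K \<in> low_sets. odd (shift_count m window K)}
    \<subseteq> {K. normal_window_set K \<and> odd (shift_count m window K)}"
proof
  fix K assume "K \<in> sets_0_top \<union> sets_1_top \<union> {K \<in> low_sets. odd (shift_count m window K)}"
  then consider "K \<in> sets_0_top" | "K \<in> sets_1_top" | "K \<in> low_sets" "odd (shift_count m window K)"
    by blast
  then show "K \<in> {K. normal_window_set K \<and> odd (shift_count m window K)}"
  proof cases
    case 1
    then show ?thesis using sets_0_top_subset_window shift_count_sets_0_top
      unfolding sets_0_top_def normal_window_set_def by auto
  next
    case 2
    then show ?thesis using sets_1_top_subset_window shift_count_sets_1_top
      unfolding sets_1_top_def normal_window_set_def by auto
  next
    case 3
    then have "K \<subseteq> window" "0 \<in> K" "h + 1 \<notin> K" unfolding low_sets_def window_def by auto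
    then show ?thesis using 3 unfolding normal_window_set_def by auto
  qed
qed

lemma normal_odd_sets_eq:
  "{K. normal_window_set K \<and> odd (shift_count m window K)}
    = sets_0_top \<union> sets_1_top \<union> {K \<in> low_sets. odd (shift_count m window K)}"
  using normal_odd_sets_subset normal_odd_sets_supset by (rule equalityI)

lemma low_setsD:
  assumes "K \<in> low_sets"
  shows "K \<subseteq> {..<h}" "0 \<in> K" "finite K"
  using assms finite_subset[of K "{..<h}"] unfolding low_sets_def by auto

lemma shift_count_low:
  assumes K: "K \<subseteq> {..<h}" "0 \<in> K" "Max K \<ge> 1"
  shows "shift_count m window K = h - Max K + (if Max K - 1 \<notin> K then 1 else 0)"
proof -
  have "finite K" using K(1) by (rule finite_subset) simp
  then have "Max K < h" using K Max_in by blast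
  then show ?thesis
    unfolding shift_count_def shifts_into_window_low[OF K] by (auto simp: card_insert_if)
qed

lemma shift_count_toggle_below_max:
  assumes K: "K \<in> low_sets" "Max K \<ge> 2"
  shows "shift_count m window (toggle_below_max K) + shift_count m window K = 2 * (h - Max K) + 1"
proof -
  note K' = low_setsD[OF K(1)]
  note fin = K'(3)
  note toggle = toggle_below_max[OF fin K'(2) K(2)]
  have "Max K < h" using K' fin Max_in by blast
  then have "toggle_below_max K \<subseteq> {..<h}" using toggle(3) by auto
  then show ?thesis
    using toggle K' K(2) by (cases "Max K - 1 \<in> K") (simp_all add: shift_count_low)
qed

lemma low_sets_eq: "low_sets = {{0}, {0, 1}} \<union> {K \<in> low_sets. 2 \<le> Max K}"
proof (intro equalityI subsetI)
  fix K assume K: "K \<in> low_sets"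
  show "K \<in> {{0}, {0, 1}} \<union> {K \<in> low_sets. 2 \<le> Max K}"
  proof (cases "Max K \<ge> 2")
    case False
    have "finite K" using low_setsD[OF K] by simp
    then have "K \<subseteq> {0, 1}" using False by (auto dest: Max_ge)
    then show ?thesis using K unfolding low_sets_def by auto
  qed (use K in simp)
qed (use h_ge_3 in \<open>auto simp: low_sets_def\<close>)

lemma card_odd_high_low_sets:
  "card {K \<in> low_sets. 2 \<le> Max K \<and> odd (shift_count m window K)} = 2 ^ (h - 2) - 1"
proof -
  let ?A = "{K \<in> low_sets. 2 \<le> Max K}"
  have fin: "finite ?A" unfolding low_sets_def by (rule finite_subset[of _ "Pow {..<h}"]) auto
  have "card ({{0::nat}, {0, 1}} \<union> ?A) = card {{0::nat}, {0, 1}} + card ?A"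
    by (rule card_Un_disjoint) (use fin in auto)
  then have "card low_sets = card {{0::nat}, {0, 1}} + card ?A"
    by (simp only: low_sets_eq[symmetric])
  moreover have "card low_sets = 2 ^ (h - 1)"
    unfolding low_sets_def using card_subsets_lessThan_containing_0 h_ge_3 by simp
  ultimately have card_A: "card ?A = 2 ^ (h - 1) - 2" by simp
  \<comment> \<open>toggling \<open>Max K - 1\<close> changes the shift count by an odd amount\<close>
  have "2 * card {K \<in> ?A. odd (shift_count m window K)} = card ?A"
  proof (rule card_half_if_involution_swaps[OF fin, where f=toggle_below_max])
    fix K assume K: "K \<in> ?A"
    then have K': "K \<subseteq> {..<h}" "0 \<in> K" "2 \<le> Max K" and fin: "finite K"
      using low_setsD by auto
    note toggle = toggle_below_max[OF fin K'(2,3)]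
    have "Max K < h" using K' fin Max_in by blast
    then show "toggle_below_max K \<in> ?A" using toggle K' unfolding low_sets_def by auto
    show "toggle_below_max (toggle_below_max K) = K" using toggle by simp
    have "odd (shift_count m window (toggle_below_max K) + shift_count m window K)"
      using shift_count_toggle_below_max[of K] K by simp
    then show "odd (shift_count m window (toggle_below_max K)) \<longleftrightarrow> \<not> odd (shift_count m window K)"
      by simp
  qed
  moreover have "h - 1 = Suc (h - 2)" using h_ge_3 by simp
  then have "(2::nat) ^ (h - 1) = 2 * 2 ^ (h - 2)" by simp
  ultimately have "2 * card {K \<in> ?A. odd (shift_count m window K)} = 2 * (2 ^ (h - 2) - 1)"
    using card_A by (simp add: diff_mult_distrib2)
  moreover have "{K \<in> ?A. odd (shift_count m window K)}
      = {K \<in> low_sets. 2 \<le> Max K \<and> odd (shift_count m window K)}" by auto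
  ultimately show ?thesis by simp
qed

lemma card_low_odd_sets:
  "card {K \<in> low_sets. odd (shift_count m window K)} = (if even h then 2 else 0) + 2 ^ (h - 2) - 1"
proof -
  have fin: "finite {K \<in> low_sets. 2 \<le> Max K \<and> odd (shift_count m window K)}"
    unfolding low_sets_def by (rule finite_subset[of _ "Pow {..<h}"]) auto
  have "shift_count m window {0} = h + 1"
    using shifts_into_window_0 unfolding shift_count_def window_def by simp
  moreover have "shift_count m window {0, 1} = h - 1"
    using shift_count_low[of "{0, 1}"] h_ge_3 by simp
  ultimately have small: "{K \<in> {{0::nat}, {0, 1}}. odd (shift_count m window K)}
      = (if even h then {{0}, {0, 1}} else {})"
    using h_ge_3 by auto
  have "{K \<in> low_sets. odd (shift_count m window K)}
      = {K \<in> {{0}, {0, 1}} \<union> {K \<in> low_sets. 2 \<le> Max K}. odd (shift_count m window K)}"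
    by (simp only: low_sets_eq[symmetric])
  also have "\<dots> = {K \<in> {{0}, {0, 1}}. odd (shift_count m window K)}
      \<union> {K \<in> low_sets. 2 \<le> Max K \<and> odd (shift_count m window K)}"
    by auto
  finally have split: "{K \<in> low_sets. odd (shift_count m window K)}
      = {K \<in> {{0}, {0, 1}}. odd (shift_count m window K)}
      \<union> {K \<in> low_sets. 2 \<le> Max K \<and> odd (shift_count m window K)}" .
  have "card ({K \<in> {{0::nat}, {0, 1}}. odd (shift_count m window K)}
      \<union> {K \<in> low_sets. 2 \<le> Max K \<and> odd (shift_count m window K)})
      = card {K \<in> {{0::nat}, {0, 1}}. odd (shift_count m window K)}
      + card {K \<in> low_sets. 2 \<le> Max K \<and> odd (shift_count m window K)}"
    by (rule card_Un_disjoint) (use fin in auto)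
  then show ?thesis unfolding split small card_odd_high_low_sets by (simp add: card_insert_if)
qed

lemma card_normal_odd_sets:
  "card {K. normal_window_set K \<and> odd (shift_count m window K)}
    = (if even h then 2 ^ h - 1 else 2 ^ h - 3)"
proof -
  have fin: "finite sets_0_top" "finite sets_1_top" "finite {K \<in> low_sets. odd (shift_count m window K)}"
    unfolding sets_0_top_def sets_1_top_def low_sets_def by auto
  have "sets_0_top \<inter> sets_1_top = {}"
    unfolding sets_0_top_def sets_1_top_def by auto
  moreover have "(sets_0_top \<union> sets_1_top) \<inter> {K \<in> low_sets. odd (shift_count m window K)} = {}"
    unfolding sets_0_top_def sets_1_top_def low_sets_def by auto
  ultimately have "card {K. normal_window_set K \<and> odd (shift_count m window K)}
      = card sets_0_top + card sets_1_top + card {K \<in> low_sets. odd (shift_count m window K)}"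
    unfolding normal_odd_sets_eq using fin by (simp add: card_Un_disjoint)
  also have "\<dots> = (2 ^ (h - 1) - 1) + (2 ^ (h - 2) - 1) + ((if even h then 2 else 0) + 2 ^ (h - 2) - 1)"
    unfolding card_sets_0_top card_sets_1_top card_low_odd_sets ..
  also have "\<dots> = (if even h then 2 ^ h - 1 else 2 ^ h - 3)"
  proof -
    obtain k where k: "h = k + 3" using h_ge_3 by (metis add.commute le_Suc_ex)
    have "(2::nat) ^ (h - 1) = 4 * 2 ^ k" "(2::nat) ^ (h - 2) = 2 * 2 ^ k" "(2::nat) ^ h = 8 * 2 ^ k"
      using k by (simp_all add: power_add)
    moreover have "(2::nat) ^ k \<ge> 1" by simp
    ultimately have "(2::nat) ^ (h - 1) - 1 + (2 ^ (h - 2) - 1) + (c + 2 ^ (h - 2) - 1) = c + 2 ^ h - 3"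
      for c by linarith
    then show ?thesis by simp
  qed
  finally show ?thesis .
qed

lemma digits_eq_cyclic_shift_window: "digits = cyclic_shift m h window"
proof -
  have "cyclic_shift m h window = (\<lambda>x. (x + h) mod m) ` {..<h} \<union> {(h + 1 + h) mod m}"
    unfolding cyclic_shift_def window_def by auto
  also have "(\<lambda>x. (x + h) mod m) ` {..<h} = (\<lambda>x. x + h) ` {..<h}"
    using m_eq by (intro image_cong refl) simp
  also have "(\<lambda>x. x + h) ` {..<h} = {h..<2 * h}"
  proof (intro equalityI subsetI)
    fix x assume "x \<in> {h..<2 * h}"
    then show "x \<in> (\<lambda>x. x + h) ` {..<h}" by (intro image_eqI[of _ _ "x - h"]) auto
  qed auto
  also have "(h + 1 + h) mod m = 0" using m_eq by (simp add: mult_2)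
  finally show ?thesis unfolding digits_def by auto
qed

lemma shift_count_digits: "E \<subseteq> {..<m} \<Longrightarrow> shift_count m digits E = shift_count m window E"
  unfolding digits_eq_cyclic_shift_window
  by (rule shift_count_cyclic_shift_right[OF m_pos window_subset])

lemma card_odd_digit_sets:
  "card {E. E \<subseteq> {..<m} \<and> odd (shift_count m digits E)}
    = 1 + m * (if even h then 2 ^ h - 1 else 2 ^ h - 3)"
proof -
  have "shift_count m digits {} = m"
    unfolding shift_count_def shifts_into_def cyclic_shift_def by simp
  then have "{E. E \<subseteq> {..<m} \<and> odd (shift_count m digits E)}
      = insert {} {E. E \<subseteq> {..<m} \<and> E \<noteq> {} \<and> odd (shift_count m window E)}"
    using shift_count_digits m_eq by auto
  moreover have "finite {E. E \<subseteq> {..<m} \<and> E \<noteq> {} \<and> odd (shift_count m window E)}"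
    by (rule finite_subset[of _ "Pow {..<m}"]) auto
  ultimately show ?thesis
    using card_odd_window_sets_eq card_normal_odd_sets by simp
qed

text \<open>These sets give the \<open>2 ^ (h - 1) - 1\<close> consecutive exponents used in the BCH bound.\<close>
lemma shift_count_digits_run:
  assumes J: "J \<subseteq> {..<h - 1}" "J \<noteq> {}"
  shows "shift_count m digits (J \<union> {h, 2 * h}) = 1"
proof -
  let ?E = "J \<union> {h, 2 * h}"
  have E: "?E \<subseteq> {..<m}" using J m_eq by auto
  have "cyclic_shift m 1 ?E = (\<lambda>x. (x + 1) mod m) ` J \<union> {(h + 1) mod m, (2 * h + 1) mod m}"
    unfolding cyclic_shift_def by auto
  also have "(\<lambda>x. (x + 1) mod m) ` J = (\<lambda>j. j + 1) ` J"
    using J m_eq by (intro image_cong refl) auto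
  also have "(h + 1) mod m = h + 1" using m_eq h_ge_3 by simp
  also have "(2 * h + 1) mod m = 0" using m_eq by simp
  finally have shift: "cyclic_shift m 1 ?E = insert 0 (insert (h + 1) ((\<lambda>j. j + 1) ` J))" by auto
  have "insert 0 (insert (h + 1) ((\<lambda>j. j + 1) ` J)) \<noteq> {0, h + 1}"
  proof
    assume F: "insert 0 (insert (h + 1) ((\<lambda>j. j + 1) ` J)) = {0, h + 1}"
    obtain j where "j \<in> J" using J by auto
    then have "j + 1 \<in> {0, h + 1}" using F by blast
    then show False using \<open>j \<in> J\<close> J by auto
  qed
  then have "insert 0 (insert (h + 1) ((\<lambda>j. j + 1) ` J)) \<in> sets_0_top"
    using J unfolding sets_0_top_def by auto
  then have "shift_count m window (cyclic_shift m 1 ?E) = 1"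
    unfolding shift by (rule shift_count_sets_0_top)
  moreover have "shift_count m digits ?E = shift_count m window (cyclic_shift m 1 ?E)"
    by (simp only: shift_count_digits[OF E] shift_count_cyclic_shift[OF m_pos])
  ultimately show ?thesis by simp
qed

end

section \<open>The cyclic code of the trace sequence\<close>

lemma two_mult_add_one_le_power_two: "h \<ge> 3 \<Longrightarrow> 2 * h + 1 \<le> (2::nat) ^ h"
  by (induction h rule: dec_induct) simp_all

locale kasami_trace_code = kasami_exponent +
  fixes \<alpha> :: "'a::{finite,field}" and g :: "bit poly"
  assumes card_field: "card (UNIV::'a set) = 2 ^ m" and alpha_primitive: "primitive_elem \<alpha>"
    and min_poly: "is_min_poly (trace_seq m (\<lambda>x. x ^ (2 ^ (2 * h) - 2 ^ h + 1)) \<alpha>) g"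
begin

sublocale seq: trace_power_sequence m \<alpha> digits
  using card_field m_pos alpha_primitive digits_subset digits_proper by unfold_locales

definition linear_span :: nat where
  "linear_span = 1 + m * (if even h then 2 ^ h - 1 else 2 ^ h - 3)"

lemma min_poly_digits: "is_min_poly (trace_seq m (\<lambda>x. x ^ set_encode digits) \<alpha>) g"
  using min_poly by (simp add: set_encode_digits)

lemma degree_generator: "degree g = linear_span"
  unfolding seq.degree_min_poly_trace_seq[OF min_poly_digits] seq.odd_shift_sets_def
    card_odd_digit_sets linear_span_def ..

lemma generator_roots:
  "E \<in> seq.odd_shift_sets \<Longrightarrow> poly (map_poly (of_bit :: bit \<Rightarrow> 'a) g) (inverse (\<alpha> ^ set_encode E)) = 0"
  using min_poly_digits seq.lin_rec_roots unfolding is_min_poly_def by blast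

lemma linear_span_less: "linear_span < 2 ^ m - 1"
proof -
  define x where "x = (2::nat) ^ h"
  have "x \<ge> 8" unfolding x_def using power_increasing[OF h_ge_3, of "2::nat"] by simp
  then have "x * x \<ge> 64" using mult_le_mono by fastforce
  moreover have "(2::nat) ^ m = 2 * (x * x)"
    unfolding x_def m_eq by (simp add: power_add power_mult_distrib[symmetric] mult_2)
  moreover have "linear_span \<le> 1 + m * (2 ^ h - 1)" unfolding linear_span_def by auto
  moreover have "m * (2 ^ h - 1) \<le> x * x"
    unfolding x_def using two_mult_add_one_le_power_two[OF h_ge_3] m_eq by (intro mult_le_mono) auto
  ultimately show ?thesis by linarith
qed

lemma even_linear_span: "even linear_span"
proof -
  have "h = Suc (h - 1)" using h_ge_3 by simp
  then have "(2::nat) ^ h = 2 * 2 ^ (h - 1)" by (metis power_Suc)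
  moreover have "(2::nat) ^ (h - 1) \<ge> 2" using power_increasing[of 1 "h - 1" "2::nat"] h_ge_3 by simp
  ultimately have "odd ((2::nat) ^ h - 1)" "odd ((2::nat) ^ h - 3)" by presburger+
  then show ?thesis unfolding linear_span_def using m_eq by auto
qed

lemma exponent_run_in_odd_shift_sets:
  assumes "l < 2 ^ (h - 1) - 1"
  shows "\<exists>E\<in>seq.odd_shift_sets. set_encode E = 1 + 2 ^ h + 2 ^ (2 * h) + l"
proof -
  let ?J = "set_decode (1 + l)"
  have J: "?J \<subseteq> {..<h - 1}"
    by (rule set_decode_subset_lessThan) (use assms in simp)
  have "?J \<noteq> {}" by (metis set_decode_inverse set_encode_empty zero_neq_one add_eq_0_iff_both_eq_0)
  then have "shift_count m digits (?J \<union> {h, 2 * h}) = 1" by (rule shift_count_digits_run[OF J])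
  then have "?J \<union> {h, 2 * h} \<in> seq.odd_shift_sets"
    unfolding seq.odd_shift_sets_def using J m_eq by auto
  moreover have "set_encode (?J \<union> {h, 2 * h}) = set_encode ?J + set_encode {h, 2 * h}"
    unfolding set_encode_def using J by (subst sum.union_disjoint) auto
  moreover have "set_encode {h, 2 * h} = 2 ^ h + 2 ^ (2 * h)" using h_ge_3 by simp
  ultimately show ?thesis by (intro bexI[of _ "?J \<union> {h, 2 * h}"]) simp_all
qed

lemma hweight_ge:
  assumes "c \<in> cyclic_code (2 ^ m - 1) g" "c \<noteq> 0"
  shows "2 ^ (h - 1) \<le> hweight c"
proof -
  obtain q where q: "c = g * q" and deg: "degree c < 2 ^ m - 1"
    using assms unfolding cyclic_code_def by (auto elim: dvdE)
  have inj: "inj_on (\<lambda>j. inverse \<alpha> ^ j) {..<2 ^ m - 1}"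
    using seq.power_alpha_inj by (auto intro!: inj_onI simp: power_inverse)
  \<comment> \<open>the exponents \<open>1 + 2 ^ h + 2 ^ (2 * h) + l\<close> give consecutive roots of \<open>c\<close>, in powers of \<open>inverse \<alpha>\<close>\<close>
  have "\<forall>l<2 ^ (h - 1) - 1. poly (map_poly of_bit c) (inverse \<alpha> ^ ((1 + 2 ^ h + 2 ^ (2 * h)) + l)) = (0::'a)"
  proof (intro allI impI)
    fix l :: nat assume "l < 2 ^ (h - 1) - 1"
    then obtain E where E: "E \<in> seq.odd_shift_sets" "set_encode E = 1 + 2 ^ h + 2 ^ (2 * h) + l"
      using exponent_run_in_odd_shift_sets by blast
    then have x: "inverse \<alpha> ^ ((1 + 2 ^ h + 2 ^ (2 * h)) + l) = inverse (\<alpha> ^ set_encode E)"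
      by (simp add: power_inverse)
    show "poly (map_poly of_bit c) (inverse \<alpha> ^ ((1 + 2 ^ h + 2 ^ (2 * h)) + l)) = (0::'a)"
      unfolding q char2_map_poly_of_bit_mult[OF seq.char2] poly_mult x generator_roots[OF E(1)]
      by simp
  qed
  moreover have "inverse \<alpha> \<noteq> 0" using seq.alpha_nonzero by simp
  ultimately have "hweight c > 2 ^ (h - 1) - 1"
    using bch_bound[OF _ inj assms(2) deg, of "2 ^ (h - 1) - 1" "1 + 2 ^ h + 2 ^ (2 * h)"] by blast
  then show ?thesis by simp
qed

text \<open>If all \<open>linear_span + 1\<close> coefficients were nonzero, \<open>g\<close> would not vanish at \<open>1\<close>,
  the root coming from the empty digit set.\<close>
lemma hweight_generator_le: "hweight g \<le> linear_span"
proof (rule ccontr)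
  let ?J = "{i. coeff g i \<noteq> 0}"
  assume "\<not> hweight g \<le> linear_span"
  moreover have sub: "?J \<subseteq> {..linear_span}"
  proof
    fix i assume "i \<in> ?J"
    then have "i \<le> degree g" by (intro le_degree) simp
    then show "i \<in> {..linear_span}" using degree_generator by simp
  qed
  moreover have "card ?J \<le> linear_span + 1" using card_mono[OF _ sub] by simp
  ultimately have "?J = {..linear_span}" unfolding hweight_def by (intro card_subset_eq) auto
  then have "poly (map_poly (of_bit :: bit \<Rightarrow> 'a) g) 1 = of_nat (linear_span + 1)"
    unfolding poly_map_poly_of_bit by simp
  also have "\<dots> = 1" using char2_of_nat[OF seq.char2] even_linear_span by simp
  finally have "poly (map_poly (of_bit :: bit \<Rightarrow> 'a) g) (inverse (\<alpha> ^ set_encode {})) \<noteq> 0" by simp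
  moreover have "{} \<in> seq.odd_shift_sets"
    unfolding seq.odd_shift_sets_def shift_count_def shifts_into_def cyclic_shift_def using m_eq by simp
  ultimately show False using generator_roots by blast
qed

lemma code_parameters:
  "card (cyclic_code (2 ^ m - 1) g) = 2 ^ (2 ^ m - 1 - linear_span) \<and>
   2 ^ (h - 1) \<le> min_dist (cyclic_code (2 ^ m - 1) g) \<and>
   min_dist (cyclic_code (2 ^ m - 1) g) \<le> linear_span"
proof -
  let ?C = "cyclic_code (2 ^ m - 1) g"
  have g0: "g \<noteq> 0" using min_poly unfolding is_min_poly_def lin_rec_def by auto
  have deg: "degree g \<le> 2 ^ m - 1" using degree_generator linear_span_less by simp
  have card: "card ?C = 2 ^ (2 ^ m - 1 - linear_span)"
    using card_cyclic_code[OF g0 deg] degree_generator by simp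
  then have "finite ?C" by (intro card_ge_0_finite) simp
  then have fin: "finite (hweight ` (?C - {0}))" by simp
  have gC: "g \<in> ?C - {0}"
    unfolding cyclic_code_def using degree_generator linear_span_less g0 by simp
  then have "2 ^ (h - 1) \<le> min_dist ?C"
    unfolding min_dist_def using hweight_ge fin by (subst Min_ge_iff) auto
  moreover have "min_dist ?C \<le> hweight g" unfolding min_dist_def using fin gC by simp
  ultimately show ?thesis using card hweight_generator_le by simp
qed

end

theorem theorem5:
  fixes m :: nat and \<alpha> :: "'a::{finite,field}" and g :: "bit poly"
  assumes "odd m" and "m \<ge> 7"
    and "card (UNIV::'a set) = 2 ^ m"
    and "primitive_elem \<alpha>"
    and "is_min_poly (trace_seq m (\<lambda>x. x ^ (2 ^ (2 * ((m - 1) div 2)) - 2 ^ ((m - 1) div 2) + 1)) \<alpha>) g"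
  shows "let h = (m - 1) div 2;
             L = (if m mod 4 = 1 then 1 + m * (2 ^ h - 1) else 1 + m * (2 ^ h - 3));
             v = 2 ^ m - 1;
             C = cyclic_code v g
         in degree g = L \<and> card C = 2 ^ (v - L) \<and>
            2 ^ ((m - 3) div 2) \<le> min_dist C \<and> min_dist C \<le> L"
proof -
  define h where "h = (m - 1) div 2"
  have m_eq: "m = 2 * h + 1" using assms(1) unfolding h_def by presburger
  interpret kasami_trace_code h m \<alpha> g
    using m_eq assms(2-5) unfolding h_def by unfold_locales simp_all
  have "(m - 3) div 2 = h - 1" "m mod 4 = 1 \<longleftrightarrow> even h" using m_eq by presburger+
  then show ?thesis
    using degree_generator code_parameters unfolding Let_def h_def[symmetric] linear_span_def
    by (cases "even h") simp_all
qed

end
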